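(* Let $q>1$, $T>0$, $\Xi=[-1,1]\times\mathbb R$, and let $\ell:\Xi\times[0,T]\to\mathbb R$ and $g:\Xi\to\mathbb R$ be bounded continuous functions. For $t\in[0,T)$ and $(x,v)\in\Xi^{\rm ad}=[-1,1)\times[0,+\infty)\cup(-1,1]\times(-\infty,0]$, let $$u(t,x,v)=\inf\Big\{\int_t^T\Big(\ell(\xi(s),\xi'(s),s)+\frac1q|\xi''(s)|^q\Big)ds+g(\xi(T),\xi'(T))\Big\},$$ the infimum being over all $\xi\in W^{2,q}(t,T)$ with $\xi(t)=x$, $\xi'(t)=v$ and $\xi(s)\in[-1,1]$ for all $s\in[t,T]$. Fix $t\in[0,T)$. \begin{enumerate} \item As $x\to1_-$ and $v>0$ with $\frac{v^{2q-1}}{(1-x)^{q-1}}\to\infty$, $$u(t,x,v)\sim\frac{q^{q-1}}{(2q-1)^q}\frac{v^{2q-1}}{(1-x)^{q-1}}.$$ \item Fix $C>0$. If $x\to1_-$ and $v>0$ with $\frac{v^{2q-1}}{(1-x)^{q-1}}<C$ and $\frac{v(T-t)}{1-x}\to+\infty$, then $$u(t,x,v)\le\frac{q^{q-1}}{(2q-1)^q}\frac{v^{2q-1}}{(1-x)^{q-1}}+u(t,1,0)+o(1),$$ where $o(1)$ denotes a quantity tending to $0$. \end{enumerate} *)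

theory Defs
  imports "HOL-Analysis.Analysis" "HOL-Library.Landau_Symbols"
begin

definition Xi :: "(real \<times> real) set" where
  "Xi = {-1..1} \<times> (UNIV :: real set)"

text \<open>One-dimensional \<open>W^{2,q}(t,T)\<close>: \<open>\<xi>\<close> is differentiable on \<open>[t,T]\<close> with derivative
  \<open>d\<xi>\<close>, and \<open>d\<xi>\<close> is absolutely continuous with a.e. derivative \<open>a \<in> L^q(t,T)\<close>, i.e.
  \<open>d\<xi>(s) = d\<xi>(t) + \<integral>_t^s a\<close>.  (Here \<open>\<xi>\<close> is the continuous representative.)\<close>
definition W2q_traj ::
  "real \<Rightarrow> real \<Rightarrow> real \<Rightarrow> (real \<Rightarrow> real) \<Rightarrow> (real \<Rightarrow> real) \<Rightarrow> (real \<Rightarrow> real) \<Rightarrow> bool" where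
  "W2q_traj q t T \<xi> d\<xi> a \<longleftrightarrow>
     set_integrable lborel {t..T} a \<and>
     set_integrable lborel {t..T} (\<lambda>s. \<bar>a s\<bar> powr q) \<and>
     (\<forall>s\<in>{t..T}. (\<xi> has_real_derivative d\<xi> s) (at s within {t..T})) \<and>
     (\<forall>s\<in>{t..T}. d\<xi> s = d\<xi> t + (LINT r:{t..s}|lborel. a r))"

definition cost ::
  "real \<Rightarrow> (real \<Rightarrow> real \<Rightarrow> real \<Rightarrow> real) \<Rightarrow> (real \<Rightarrow> real \<Rightarrow> real) \<Rightarrow> real \<Rightarrow> real \<Rightarrow>
   (real \<Rightarrow> real) \<Rightarrow> (real \<Rightarrow> real) \<Rightarrow> (real \<Rightarrow> real) \<Rightarrow> real" where
  "cost q l g T t \<xi> d\<xi> a =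
     (LINT s:{t..T}|lborel. l (\<xi> s) (d\<xi> s) s + (1/q) * \<bar>a s\<bar> powr q) + g (\<xi> T) (d\<xi> T)"

definition value_fun ::
  "real \<Rightarrow> (real \<Rightarrow> real \<Rightarrow> real \<Rightarrow> real) \<Rightarrow> (real \<Rightarrow> real \<Rightarrow> real) \<Rightarrow> real \<Rightarrow>
   real \<Rightarrow> real \<Rightarrow> real \<Rightarrow> real" where
  "value_fun q l g T t x v =
     Inf {cost q l g T t \<xi> d\<xi> a | \<xi> d\<xi> a.
            W2q_traj q t T \<xi> d\<xi> a \<and> \<xi> t = x \<and> d\<xi> t = v \<and> (\<forall>s\<in>{t..T}. \<xi> s \<in> {-1..1})}"

end

theory Submission
  imports Defs
begin

text \<open>Write \<open>d = 1 - x\<close> and \<open>p = 1/(q - 1)\<close>. Every admissible trajectory satisfies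
  \<open>\<xi>(S) = x + (S - t) v + \<integral>\<^sub>t\<^sup>S (S - r) \<xi>''(r) dr \<le> 1\<close>. Testing this against the weight
  \<open>c (S - r)^p\<close> by Young's inequality, with braking time \<open>S - t = (p + 2) d / v\<close> and the optimal
  amplitude \<open>c\<close>, bounds \<open>(1/q) \<integral> |\<xi>''|^q\<close> from below by the braking energy
  \<open>K v^(2q-1) / d^(q-1)\<close>, \<open>K = q^(q-1) / (2q-1)^q\<close>; the braking profile
  \<open>\<xi>'' = -c (S - s)\<^sub>+^p\<close>, which comes to rest exactly at the wall at time \<open>S\<close>, attains it.
  Since \<open>\<ell>\<close> and \<open>g\<close> are bounded, the value function differs from the braking energy by a bounded
  amount as soon as \<open>S \<le> T\<close>, which gives the asymptotic equivalence.
  For the second claim the braking profile is superposed on an almost optimal trajectory starting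
  at rest at the wall. The braking time tends to \<open>0\<close>, and the convexity estimate
  \<open>|a + b|^q \<le> \<theta>^(1-q) |a|^q + (1 - \<theta>)^(1-q) |b|^q\<close> bounds the extra cost by \<open>\<theta>^(1-q)\<close> times
  the braking energy plus a vanishing term.\<close>

section \<open>Truncated powers and the braking profile\<close>

lemma has_real_derivative_max0_powr:
  fixes k y :: real
  assumes k: "k > 1"
  shows "((\<lambda>y. max 0 y powr k) has_real_derivative k * max 0 y powr (k - 1)) (at y)"
proof (cases y "0 :: real" rule: linorder_cases)
  case less
  have "((\<lambda>y. 0) has_real_derivative k * max 0 y powr (k - 1)) (at y)"
    using less by simp
  then show ?thesis
    by (rule has_field_derivative_transform_within_open[where S="{..<0}"]) (use less in auto)
next
  case equal
  have "((\<lambda>z. (max 0 z powr k - max 0 0 powr k) / (z - 0)) \<longlongrightarrow> 0) (at 0)"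
  proof (rule Lim_null_comparison)
    show "\<forall>\<^sub>F z in at 0. norm ((max 0 z powr k - max 0 0 powr k) / (z - 0)) \<le> \<bar>z\<bar> powr (k - 1)"
    proof (intro always_eventually allI)
      fix z :: real
      show "norm ((max 0 z powr k - max 0 0 powr k) / (z - 0)) \<le> \<bar>z\<bar> powr (k - 1)"
      proof (cases "z > 0")
        case True
        then have "z powr k / z = z powr (k - 1)"
          by (simp add: powr_diff)
        with True show ?thesis
          by simp
      qed simp
    qed
    show "((\<lambda>z. \<bar>z\<bar> powr (k - 1)) \<longlongrightarrow> 0) (at (0::real))"
      by (rule tendsto_zero_powrI) (auto intro!: tendsto_eq_intros simp: k)
  qed
  then show ?thesis
    using equal k by (simp add: has_field_derivative_iff)
next
  case greater
  have "((\<lambda>y. y powr k) has_real_derivative k * max 0 y powr (k - 1)) (at y)"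
    using greater by (auto intro!: derivative_eq_intros)
  then show ?thesis
    by (rule has_field_derivative_transform_within_open[where S="{0<..}"]) (use greater in auto)
qed

lemma has_real_derivative_max0_diff_powr:
  fixes k :: real
  assumes "k > 1"
  shows "((\<lambda>s. max 0 (S - s) powr k) has_real_derivative - (k * max 0 (S - s) powr (k - 1)))
           (at s within A)"
proof -
  have "((\<lambda>s. S - s) has_real_derivative - 1) (at s within A)"
    by (auto intro!: derivative_eq_intros)
  from DERIV_chain[OF has_real_derivative_max0_powr[OF assms] this] show ?thesis
    by (simp add: o_def)
qed

lemma set_integral_FTC_Icc:
  fixes f F :: "real \<Rightarrow> real"
  assumes "a \<le> b"
    and "\<And>x. x \<in> {a..b} \<Longrightarrow> (F has_real_derivative f x) (at x within {a..b})"
    and "continuous_on {a..b} f"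
  shows "(LINT x:{a..b}|lborel. f x) = F b - F a"
  unfolding set_lebesgue_integral_def using assms
  by (intro integral_FTC_atLeastAtMost) (auto simp: has_real_derivative_iff_has_vector_derivative)

lemma set_integral_max0_diff_powr:
  fixes k t S :: real
  assumes k: "k > 0" and tS: "t \<le> S"
  shows "(LINT r:{t..S}|lborel. max 0 (S - r) powr k) = (S - t) powr (k + 1) / (k + 1)"
proof -
  have "((\<lambda>s. - 1 / (k + 1) * max 0 (S - s) powr (k + 1)) has_real_derivative
           - 1 / (k + 1) * - ((k + 1) * max 0 (S - s) powr (k + 1 - 1))) (at s within A)" for s A
    using k by (intro DERIV_cmult has_real_derivative_max0_diff_powr) simp
  then have F: "((\<lambda>s. - 1 / (k + 1) * max 0 (S - s) powr (k + 1)) has_real_derivative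
           max 0 (S - s) powr k) (at s within A)" for s A
    using k by simp
  have "continuous_on {t..S} (\<lambda>r. max 0 (S - r) powr k)"
    using k by (intro continuous_intros continuous_on_powr') auto
  from set_integral_FTC_Icc[OF tS F this]
  have "(LINT r:{t..S}|lborel. max 0 (S - r) powr k)
      = - 1 / (k + 1) * max 0 (S - S) powr (k + 1) - - 1 / (k + 1) * max 0 (S - t) powr (k + 1)" .
  then show ?thesis
    using tS by simp
qed

definition brake_acc :: "real \<Rightarrow> real \<Rightarrow> real \<Rightarrow> real \<Rightarrow> real" where
  "brake_acc p c S s = - c * max 0 (S - s) powr p"

definition brake_vel :: "real \<Rightarrow> real \<Rightarrow> real \<Rightarrow> real \<Rightarrow> real" where
  "brake_vel p c S s = c * max 0 (S - s) powr (p + 1) / (p + 1)"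

definition brake_disp :: "real \<Rightarrow> real \<Rightarrow> real \<Rightarrow> real \<Rightarrow> real" where
  "brake_disp p c S s = - c * max 0 (S - s) powr (p + 2) / ((p + 1) * (p + 2))"

lemma has_real_derivative_brake_disp:
  assumes "p > 0"
  shows "(brake_disp p c S has_real_derivative brake_vel p c S s) (at s within A)"
proof -
  have "((\<lambda>s. - c / ((p + 1) * (p + 2)) * max 0 (S - s) powr (p + 2)) has_real_derivative
      - c / ((p + 1) * (p + 2)) * - ((p + 2) * max 0 (S - s) powr (p + 2 - 1))) (at s within A)"
    using assms by (intro DERIV_cmult has_real_derivative_max0_diff_powr) simp
  moreover have "- c / ((p + 1) * (p + 2)) * - ((p + 2) * max 0 (S - s) powr (p + 2 - 1))
      = brake_vel p c S s"
    using assms by (simp add: brake_vel_def add.commute)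
  moreover have "(\<lambda>s. - c / ((p + 1) * (p + 2)) * max 0 (S - s) powr (p + 2)) = brake_disp p c S"
    by (simp add: fun_eq_iff brake_disp_def)
  ultimately show ?thesis
    by simp
qed

lemma has_real_derivative_brake_vel:
  assumes "p > 0"
  shows "(brake_vel p c S has_real_derivative brake_acc p c S s) (at s within A)"
proof -
  have "((\<lambda>s. c / (p + 1) * max 0 (S - s) powr (p + 1)) has_real_derivative
      c / (p + 1) * - ((p + 1) * max 0 (S - s) powr (p + 1 - 1))) (at s within A)"
    using assms by (intro DERIV_cmult has_real_derivative_max0_diff_powr) simp
  moreover have "c / (p + 1) * - ((p + 1) * max 0 (S - s) powr (p + 1 - 1)) = brake_acc p c S s"
    using assms by (simp add: brake_acc_def)
  moreover have "(\<lambda>s. c / (p + 1) * max 0 (S - s) powr (p + 1)) = brake_vel p c S"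
    by (simp add: fun_eq_iff brake_vel_def)
  ultimately show ?thesis
    by simp
qed

lemma continuous_on_brake_acc: "p > 0 \<Longrightarrow> continuous_on A (brake_acc p c S)"
  unfolding brake_acc_def by (intro continuous_intros continuous_on_powr') auto

lemma brake_eq_0_after:
  assumes "S \<le> s" "p > 0"
  shows "brake_disp p c S s = 0" "brake_vel p c S s = 0" "brake_acc p c S s = 0"
  using assms by (auto simp: brake_disp_def brake_vel_def brake_acc_def max_def)

lemma brake_disp_nonpos: "c \<ge> 0 \<Longrightarrow> p > 0 \<Longrightarrow> brake_disp p c S s \<le> 0"
  by (simp add: brake_disp_def)

lemma brake_disp_mono:
  assumes "c \<ge> 0" "p > 0" "s \<le> s'"
  shows "brake_disp p c S s \<le> brake_disp p c S s'"
proof -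
  have "max 0 (S - s') powr (p + 2) \<le> max 0 (S - s) powr (p + 2)"
    using assms by (intro powr_mono2) auto
  then show ?thesis
    using assms unfolding brake_disp_def
    by (intro divide_right_mono) (auto intro: mult_left_mono)
qed

lemma set_integral_brake_acc_powr:
  assumes p: "p > 0" and pq: "p * q = p + 1" and c: "c \<ge> 0" and tS: "t \<le> S"
  shows "(LINT r:{t..S}|lborel. \<bar>brake_acc p c S r\<bar> powr q)
           = c powr q * (S - t) powr (p + 2) / (p + 2)"
proof -
  have "\<bar>brake_acc p c S r\<bar> powr q = c powr q * max 0 (S - r) powr (p + 1)" for r
    using c by (simp add: brake_acc_def abs_mult powr_mult powr_powr pq)
  then have "(LINT r:{t..S}|lborel. \<bar>brake_acc p c S r\<bar> powr q)
      = c powr q * (LINT r:{t..S}|lborel. max 0 (S - r) powr (p + 1))"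
    by simp
  also have "\<dots> = c powr q * ((S - t) powr (p + 2) / (p + 2))"
    using set_integral_max0_diff_powr[of "p + 1" t S] p tS by (simp add: add.assoc)
  finally show ?thesis
    by simp
qed

section \<open>The optimal braking parameters\<close>

definition brake_exp :: "real \<Rightarrow> real" where
  "brake_exp q = 1 / (q - 1)"

definition brake_time :: "real \<Rightarrow> real \<Rightarrow> real \<Rightarrow> real" where
  "brake_time q x v = (brake_exp q + 2) * (1 - x) / v"

definition brake_amp :: "real \<Rightarrow> real \<Rightarrow> real \<Rightarrow> real" where
  "brake_amp q x v = (brake_exp q + 1) * v / brake_time q x v powr (brake_exp q + 1)"

definition braking_energy :: "real \<Rightarrow> real \<Rightarrow> real \<Rightarrow> real" where
  "braking_energy q x v =
     q powr (q - 1) / (2 * q - 1) powr q * (v powr (2 * q - 1) / (1 - x) powr (q - 1))"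

lemma brake_exp_pos: "q > 1 \<Longrightarrow> brake_exp q > 0"
  by (simp add: brake_exp_def)

lemma brake_exp_mult: "q > 1 \<Longrightarrow> brake_exp q * q = brake_exp q + 1"
  by (simp add: brake_exp_def field_simps)

context
  fixes q x v :: real
  assumes q: "q > 1" and x: "x < 1" and v: "v > 0"
begin

lemma brake_time_pos: "brake_time q x v > 0"
  using brake_exp_pos[OF q] x v by (simp add: brake_time_def)

lemma brake_amp_pos: "brake_amp q x v > 0"
  using brake_exp_pos[OF q] brake_time_pos v by (simp add: brake_amp_def)

lemma brake_time_mult: "brake_time q x v * v = (brake_exp q + 2) * (1 - x)"
  using v by (simp add: brake_time_def)

lemma brake_amp_mult_time_powr_vel:
  "brake_amp q x v * brake_time q x v powr (brake_exp q + 1) = (brake_exp q + 1) * v"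
  using brake_time_pos by (simp add: brake_amp_def)

lemma brake_amp_mult_time_powr_disp:
  "brake_amp q x v * brake_time q x v powr (brake_exp q + 2)
     = (brake_exp q + 1) * (brake_exp q + 2) * (1 - x)"
proof -
  let ?h = "brake_time q x v" and ?p = "brake_exp q"
  have "?h powr (?p + 2) = ?h powr (?p + 1) * ?h"
    using brake_time_pos powr_add[of ?h "?p + 1" 1] by (simp add: add.assoc)
  then have "brake_amp q x v * ?h powr (?p + 2) = (brake_amp q x v * ?h powr (?p + 1)) * ?h"
    by simp
  also have "\<dots> = (?p + 1) * (?h * v)"
    by (simp add: brake_amp_mult_time_powr_vel)
  finally show ?thesis
    by (simp add: brake_time_mult)
qed

lemma brake_disp_start:
  "brake_disp (brake_exp q) (brake_amp q x v) (t + brake_time q x v) t = x - 1"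
  using brake_amp_mult_time_powr_disp brake_time_pos brake_exp_pos[OF q]
  by (simp add: brake_disp_def)

lemma brake_vel_start:
  "brake_vel (brake_exp q) (brake_amp q x v) (t + brake_time q x v) t = v"
  using brake_amp_mult_time_powr_vel brake_time_pos brake_exp_pos[OF q]
  by (simp add: brake_vel_def)

lemma brake_amp_powr_eq_braking_energy:
  "brake_amp q x v powr (q - 1) * (1 - x) / (q - 1) = braking_energy q x v"
proof -
  let ?p = "brake_exp q" and ?h = "brake_time q x v"
  define d where "d = 1 - x"
  have q1: "q - 1 > 0" and d: "d > 0"
    using q x by (simp_all add: d_def)
  have p1: "?p + 1 = q / (q - 1)" and p2: "?p + 2 = (2 * q - 1) / (q - 1)"
    using q1 by (simp_all add: brake_exp_def field_simps)
  define A B Q1 V1 Vq D1 where "A = q powr (q - 1)" and "B = (2 * q - 1) powr q"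
    and "Q1 = (q - 1) powr (q - 1)" and "V1 = v powr (q - 1)" and "Vq = v powr q"
    and "D1 = d powr (q - 1)"
  have pos: "A > 0" "B > 0" "Q1 > 0" "V1 > 0" "Vq > 0" "D1 > 0"
    unfolding A_def B_def Q1_def V1_def Vq_def D1_def using q d v by simp_all
  have "(?h powr (?p + 1)) powr (q - 1) = ?h powr q"
    using q1 by (simp add: powr_powr p1)
  then have c: "brake_amp q x v powr (q - 1) = (?p + 1) powr (q - 1) * V1 / ?h powr q"
    unfolding V1_def using q1 v brake_time_pos
    by (simp add: brake_amp_def powr_divide powr_mult)
  have powr_q: "y powr q = y powr (q - 1) * y" if "y > 0" for y
    using powr_add[of y "q - 1" 1] that by simp
  have "(q - 1) powr q = Q1 * (q - 1)" and "d powr q = D1 * d" and "v powr (2 * q - 1) = V1 * Vq"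
    unfolding Q1_def D1_def V1_def Vq_def using q1 d
    by (simp_all add: powr_q powr_add[symmetric])
  then have h: "?h powr q = B / (Q1 * (q - 1)) * (D1 * d) / Vq"
      and v_powr: "v powr (2 * q - 1) = V1 * Vq"
    unfolding brake_time_def p2 B_def d_def[symmetric] Vq_def using q1 d v by (simp_all add: powr_divide powr_mult)
  have "(?p + 1) powr (q - 1) = A / Q1"
    unfolding p1 A_def Q1_def using q1 by (simp add: powr_divide)
  then have "brake_amp q x v powr (q - 1) * d / (q - 1)
      = A / Q1 * V1 / (B / (Q1 * (q - 1)) * (D1 * d) / Vq) * d / (q - 1)"
    by (simp add: c h)
  also have "\<dots> = A / B * (V1 * Vq / D1)"
    using pos q1 d by (simp add: field_simps)
  finally show ?thesis
    unfolding braking_energy_def v_powr A_def B_def D1_def d_def .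
qed

lemma brake_acc_energy:
  "(1 / q) * (LINT s:{t..t + brake_time q x v}|lborel.
      \<bar>brake_acc (brake_exp q) (brake_amp q x v) (t + brake_time q x v) s\<bar> powr q)
     = braking_energy q x v"
proof -
  let ?p = "brake_exp q" and ?h = "brake_time q x v" and ?c = "brake_amp q x v"
  have "?c powr q = ?c powr (q - 1) * ?c"
    using brake_amp_pos powr_add[of ?c "q - 1" 1] by simp
  then have "?c powr q * ?h powr (?p + 2) = ?c powr (q - 1) * (?c * ?h powr (?p + 2))"
    by simp
  also have "\<dots> = ?c powr (q - 1) * (?p + 1) * (?p + 2) * (1 - x)"
    by (simp add: brake_amp_mult_time_powr_disp)
  finally have "(1 / q) * (?c powr q * ?h powr (?p + 2) / (?p + 2))
      = ?c powr (q - 1) * (1 - x) * ((?p + 1) / q)"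
    using brake_exp_pos[OF q] by simp
  also have "(?p + 1) / q = 1 / (q - 1)"
    using q by (simp add: brake_exp_def field_simps)
  finally show ?thesis
    using set_integral_brake_acc_powr[OF brake_exp_pos[OF q] brake_exp_mult[OF q]
        less_imp_le[OF brake_amp_pos], of t "t + ?h"] brake_time_pos
      brake_amp_powr_eq_braking_energy
    by simp
qed

(* The right-hand side is the lower bound of W2q_traj_energy_ge below, for the optimal amplitude
   and braking time. *)
lemma braking_energy_eq_dual_bound:
  "braking_energy q x v = brake_amp q x v powr (q - 1) * (x + brake_time q x v * v - 1)
     - (q - 1) / q * (LINT r:{t..t + brake_time q x v}|lborel.
         \<bar>brake_acc (brake_exp q) (brake_amp q x v) (t + brake_time q x v) r\<bar> powr q)"
proof -
  let ?p = "brake_exp q" and ?c = "brake_amp q x v"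
  have "x + brake_time q x v * v - 1 = (?p + 1) * (1 - x)"
    using brake_time_mult by (simp add: algebra_simps)
  then have "?c powr (q - 1) * (x + brake_time q x v * v - 1) = (?p + 1) * (?c powr (q - 1) * (1 - x))"
    by simp
  also have "?c powr (q - 1) * (1 - x) = (q - 1) * braking_energy q x v"
    using q brake_amp_powr_eq_braking_energy by (simp add: field_simps)
  also have "(?p + 1) * ((q - 1) * braking_energy q x v) = (?p + 1) * (q - 1) * braking_energy q x v"
    by simp
  also have "(?p + 1) * (q - 1) = q"
    using q by (simp add: brake_exp_def field_simps)
  finally have "?c powr (q - 1) * (x + brake_time q x v * v - 1) = q * braking_energy q x v" .
  moreover have "(q - 1) / q * (LINT r:{t..t + brake_time q x v}|lborel.
      \<bar>brake_acc ?p ?c (t + brake_time q x v) r\<bar> powr q) = (q - 1) * braking_energy q x v"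
    unfolding brake_acc_energy[of t, symmetric] by simp
  ultimately show ?thesis
    by (simp add: algebra_simps)
qed

end

lemma braking_energy_scale_le:
  fixes q C e :: real
  assumes q: "q > 1" and C: "C > 0" and e: "e > 0"
  obtains \<theta> where "0 < \<theta>" "\<theta> < 1"
    and "\<And>x v. v powr (2*q - 1) / (1 - x) powr (q - 1) < C \<Longrightarrow>
           \<theta> powr (1 - q) * braking_energy q x v \<le> braking_energy q x v + e"
proof -
  define K where "K = q powr (q - 1) / (2 * q - 1) powr q"
  have K: "K > 0"
    using q by (simp add: K_def)
  define \<theta> where "\<theta> = (1 + e / (K * C)) powr (1 / (1 - q))"
  have "e / (K * C) > 0"
    using e K C by simp
  then have "0 < \<theta>" "\<theta> < 1" and \<theta>_powr: "\<theta> powr (1 - q) = 1 + e / (K * C)"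
    using q by (auto simp: \<theta>_def powr_powr intro: powr_less_one)
  moreover have "\<theta> powr (1 - q) * braking_energy q x v \<le> braking_energy q x v + e"
    if "v powr (2*q - 1) / (1 - x) powr (q - 1) < C" for x v
  proof -
    have "braking_energy q x v \<le> K * C"
      unfolding braking_energy_def K_def[symmetric] using that K by (intro mult_left_mono) auto
    then have "e / (K * C) * braking_energy q x v \<le> e / (K * C) * (K * C)"
      using K e C by (intro mult_left_mono) auto
    then show ?thesis
      using K C unfolding \<theta>_powr by (simp add: algebra_simps)
  qed
  ultimately show ?thesis
    using that by blast
qed

section \<open>Sobolev trajectories\<close>

lemma W2q_trajD:
  assumes "W2q_traj q t T \<xi> d\<xi> a"
  shows "set_integrable lborel {t..T} a" "set_integrable lborel {t..T} (\<lambda>s. \<bar>a s\<bar> powr q)"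
    "\<And>s. s \<in> {t..T} \<Longrightarrow> (\<xi> has_real_derivative d\<xi> s) (at s within {t..T})"
    "\<And>s. s \<in> {t..T} \<Longrightarrow> d\<xi> s = d\<xi> t + (LINT r:{t..s}|lborel. a r)"
  using assms unfolding W2q_traj_def by blast+

lemma W2q_traj_continuous:
  assumes W: "W2q_traj q t T \<xi> d\<xi> a"
  shows "continuous_on {t..T} \<xi>" "continuous_on {t..T} d\<xi>"
proof -
  note WD = W2q_trajD[OF W]
  show "continuous_on {t..T} \<xi>"
    unfolding continuous_on_eq_continuous_within using DERIV_continuous[OF WD(3)] by blast
  have "continuous_on {t..T} (\<lambda>s. d\<xi> t + integral {t..s} a)"
    by (intro continuous_intros indefinite_integral_continuous_1
        set_borel_integral_eq_integral(1)[OF WD(1)])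
  moreover have "d\<xi> t + integral {t..s} a = d\<xi> s" if s: "s \<in> {t..T}" for s
    using WD(4)[OF s] set_integrable_subset[OF WD(1), of "{t..s}"] s
    by (simp add: set_borel_integral_eq_integral(2))
  ultimately show "continuous_on {t..T} d\<xi>"
    by (rule continuous_on_eq)
qed

lemma set_integrable_continuous_mult:
  fixes f g :: "real \<Rightarrow> real"
  assumes f: "set_integrable lborel {a..b} f" and g: "continuous_on {a..b} g"
  shows "set_integrable lborel {a..b} (\<lambda>x. g x * f x)"
proof -
  have "bounded (g ` {a..b})"
    using compact_imp_bounded[OF compact_continuous_image[OF g compact_Icc]] .
  then obtain B where "\<forall>y\<in>g ` {a..b}. norm y \<le> B"
    unfolding bounded_iff by blast
  then have B: "\<And>x. x \<in> {a..b} \<Longrightarrow> \<bar>g x\<bar> \<le> B"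
    by simp
  have "(\<lambda>x. indicator {a..b} x * f x) \<in> borel_measurable lborel"
    using f unfolding set_integrable_def by (simp add: borel_measurable_integrable)
  moreover have "(\<lambda>x. indicator {a..b} x *\<^sub>R g x) \<in> borel_measurable borel"
    by (rule borel_measurable_continuous_on_indicator) (use g in auto)
  moreover have "(\<lambda>x. indicator {a..b} x *\<^sub>R (g x * f x))
      = (\<lambda>x. (indicator {a..b} x * g x) * (indicator {a..b} x * f x))"
    by (auto simp: indicator_def fun_eq_iff)
  ultimately have meas: "set_borel_measurable lborel {a..b} (\<lambda>x. g x * f x)"
    unfolding set_borel_measurable_def by simp
  have "AE x in lborel. x \<in> {a..b} \<longrightarrow> norm (g x * f x) \<le> norm (B * f x)"
  proof (intro AE_I2 impI)
    fix x assume x: "x \<in> {a..b}"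
    then have "B \<ge> 0"
      using B[OF x] by simp
    then show "norm (g x * f x) \<le> norm (B * f x)"
      using B[OF x] by (simp add: abs_mult mult_right_mono)
  qed
  with set_integrable_mult_right[OF f] meas show ?thesis
    by (rule set_integrable_bound)
qed

lemma integral_triangle_indicator:
  fixes t S r :: real
  shows "(\<integral>s. indicator {t..S} s * indicator {t..s} r \<partial>lborel) = indicator {t..S} r * (S - r)"
proof (cases "r \<in> {t..S}")
  case True
  have "(\<lambda>s. indicator {t..S} s * indicator {t..s} r) = (indicator {r..S} :: real \<Rightarrow> real)"
    using True by (auto simp: fun_eq_iff indicator_def)
  then show ?thesis
    using True by simp
next
  case False
  have "(\<lambda>s. indicator {t..S} s * indicator {t..s} r) = (\<lambda>_. 0 :: real)"
    using False by (auto simp: fun_eq_iff indicator_def)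
  then show ?thesis
    using False by simp
qed

lemma integrable_triangle_kernel:
  fixes f :: "real \<Rightarrow> real"
  assumes f: "integrable lborel f" and tS: "t \<le> S"
  shows "integrable (lborel \<Otimes>\<^sub>M lborel) (\<lambda>(r, s). indicator {t..S} s * (indicator {t..s} r * f r))"
    (is "integrable _ (\<lambda>(r, s). ?F r s)")
proof (rule lborel_pair.Fubini_integrable)
  have fm[measurable]: "f \<in> borel_measurable lborel"
    using f by (rule borel_measurable_integrable)
  have "(\<lambda>z. f (fst z)) \<in> borel_measurable (lborel \<Otimes>\<^sub>M lborel)"
    by (rule measurable_compose[OF measurable_fst]) simp
  moreover have eq: "(\<lambda>(r, s). ?F r s)
      = (\<lambda>z. indicator {t..S} (snd z) * (of_bool (t \<le> fst z \<and> fst z \<le> snd z) * f (fst z)))"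
    by (auto simp: indicator_def fun_eq_iff)
  ultimately show "(\<lambda>(r, s). ?F r s) \<in> borel_measurable (lborel \<Otimes>\<^sub>M lborel)"
    unfolding eq by measurable
  have "(\<integral>s. norm (?F r s) \<partial>lborel) = indicator {t..S} r * (S - r) * \<bar>f r\<bar>" for r
  proof -
    have "(\<integral>s. norm (?F r s) \<partial>lborel) = (\<integral>s. (indicator {t..S} s * indicator {t..s} r) * \<bar>f r\<bar> \<partial>lborel)"
      by (simp add: abs_mult mult.assoc[symmetric])
    also have "\<dots> = indicator {t..S} r * (S - r) * \<bar>f r\<bar>"
      by (simp only: integral_mult_left_zero integral_triangle_indicator)
    finally show ?thesis .
  qed
  moreover have "integrable lborel (\<lambda>r. indicator {t..S} r * (S - r) * \<bar>f r\<bar>)"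
  proof (rule Bochner_Integration.integrable_bound)
    show "integrable lborel (\<lambda>r. (S - t) * \<bar>f r\<bar>)"
      using f by auto
    show "AE r in lborel. norm (indicator {t..S} r * (S - r) * \<bar>f r\<bar>) \<le> norm ((S - t) * \<bar>f r\<bar>)"
      using tS by (auto simp: indicator_def abs_mult intro!: mult_right_mono)
  qed measurable
  ultimately show "integrable lborel (\<lambda>r. \<integral>s. norm ((\<lambda>(r, s). ?F r s) (r, s)) \<partial>lborel)"
    by simp
  show "AE r in lborel. integrable lborel (\<lambda>s. (\<lambda>(r, s). ?F r s) (r, s))"
  proof (rule AE_I2)
    fix r
    have "set_integrable lborel {t..S} (\<lambda>_. \<bar>f r\<bar>)"
      by (rule borel_integrable_atLeastAtMost') simp
    then show "integrable lborel (\<lambda>s. (\<lambda>(r, s). ?F r s) (r, s))"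
      unfolding set_integrable_def
    proof (rule Bochner_Integration.integrable_bound)
      have "(\<lambda>s. ?F r s) = (\<lambda>s. (of_bool (t \<le> r) * f r) * indicator ({t..S} \<inter> {r..}) s)"
        by (auto simp: indicator_def fun_eq_iff)
      then show "(\<lambda>s. (\<lambda>(r, s). ?F r s) (r, s)) \<in> borel_measurable lborel"
        by simp
      show "AE s in lborel. norm ((\<lambda>(r, s). ?F r s) (r, s)) \<le> norm (indicator {t..S} s *\<^sub>R \<bar>f r\<bar>)"
        by (auto simp: indicator_def)
    qed
  qed
qed

lemma cauchy_repeated_set_integral:
  fixes a :: "real \<Rightarrow> real"
  assumes a: "set_integrable lborel {t..S} a" and tS: "t \<le> S"
  shows "set_integrable lborel {t..S} (\<lambda>s. LINT r:{t..s}|lborel. a r)"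
    and "(LINT s:{t..S}|lborel. (LINT r:{t..s}|lborel. a r)) = (LINT r:{t..S}|lborel. (S - r) * a r)"
proof -
  define f where "f r = indicator {t..S} r * a r" for r
  define F where "F r s = indicator {t..S} s * (indicator {t..s} r * f r)" for r s :: real
  have "integrable lborel f"
    using a unfolding set_integrable_def f_def by simp
  from integrable_triangle_kernel[OF this tS]
  have F: "integrable (lborel \<Otimes>\<^sub>M lborel) (\<lambda>(r, s). F r s)"
    unfolding F_def .
  have inner_r: "(\<integral>r. F r s \<partial>lborel) = indicator {t..S} s * (LINT r:{t..s}|lborel. a r)" for s
  proof (cases "s \<in> {t..S}")
    case True
    then have "(\<lambda>r. F r s) = (\<lambda>r. indicator {t..s} r *\<^sub>R a r)"
      by (auto simp: fun_eq_iff F_def f_def indicator_def)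
    with True show ?thesis
      by (simp add: set_lebesgue_integral_def)
  qed (simp add: F_def)
  have inner_s: "(\<integral>s. F r s \<partial>lborel) = indicator {t..S} r *\<^sub>R ((S - r) * a r)" for r
  proof -
    have "(\<integral>s. F r s \<partial>lborel) = (\<integral>s. (indicator {t..S} s * indicator {t..s} r) * f r \<partial>lborel)"
      by (simp add: F_def mult.assoc)
    also have "\<dots> = indicator {t..S} r * (S - r) * f r"
      by (simp only: integral_mult_left_zero integral_triangle_indicator)
    finally show ?thesis
      by (simp add: f_def indicator_def)
  qed
  show "set_integrable lborel {t..S} (\<lambda>s. LINT r:{t..s}|lborel. a r)"
    using lborel_pair.integrable_snd[OF F] unfolding set_integrable_def inner_r by simp
  show "(LINT s:{t..S}|lborel. (LINT r:{t..s}|lborel. a r)) = (LINT r:{t..S}|lborel. (S - r) * a r)"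
    using lborel_pair.Fubini_integral[OF F] unfolding inner_r inner_s
    by (simp add: set_lebesgue_integral_def)
qed

lemma W2q_traj_taylor:
  assumes W: "W2q_traj q t T \<xi> d\<xi> a" and S: "t \<le> S" "S \<le> T"
  shows "\<xi> S = \<xi> t + (S - t) * d\<xi> t + (LINT r:{t..S}|lborel. (S - r) * a r)"
proof -
  note WD = W2q_trajD[OF W]
  have sub: "{t..S} \<subseteq> {t..T}"
    using S by auto
  define A where "A s = (LINT r:{t..s}|lborel. a r)" for s
  have Ai: "set_integrable lborel {t..S} A"
    and A_int: "(LINT s:{t..S}|lborel. A s) = (LINT r:{t..S}|lborel. (S - r) * a r)"
    using cauchy_repeated_set_integral[OF set_integrable_subset[OF WD(1) _ sub] S(1)]
    unfolding A_def by auto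
  have d\<xi>_eq: "d\<xi> s = d\<xi> t + A s" if "s \<in> {t..S}" for s
    unfolding A_def using that sub by (intro WD(4)) auto
  have "(d\<xi> has_integral (\<xi> S - \<xi> t)) {t..S}"
  proof (rule fundamental_theorem_of_calculus[OF S(1)])
    fix s assume "s \<in> {t..S}"
    then have "(\<xi> has_real_derivative d\<xi> s) (at s within {t..S})"
      using sub by (intro DERIV_subset[OF WD(3) sub]) auto
    then show "(\<xi> has_vector_derivative d\<xi> s) (at s within {t..S})"
      by (simp add: has_real_derivative_iff_has_vector_derivative)
  qed
  then have "((\<lambda>s. d\<xi> t + A s) has_integral (\<xi> S - \<xi> t)) {t..S}"
    using has_integral_cong[of "{t..S}" d\<xi> "\<lambda>s. d\<xi> t + A s"] d\<xi>_eq by blast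
  moreover have "((\<lambda>s. d\<xi> t + A s) has_integral
      (measure lborel {t..S} *\<^sub>R d\<xi> t + integral {t..S} A)) {t..S}"
    by (intro has_integral_add has_integral_const_real integrable_integral
        set_borel_integral_eq_integral(1)[OF Ai])
  ultimately have "\<xi> S - \<xi> t = measure lborel {t..S} *\<^sub>R d\<xi> t + integral {t..S} A"
    by (rule has_integral_unique)
  then show ?thesis
    using S set_borel_integral_eq_integral(2)[OF Ai] A_int by simp
qed

lemma abs_add_powr_le:
  fixes a b \<theta> q :: real
  assumes q: "q \<ge> 1" and \<theta>: "0 < \<theta>" "\<theta> < 1"
  shows "\<bar>a + b\<bar> powr q \<le> \<theta> powr (1 - q) * \<bar>b\<bar> powr q + (1 - \<theta>) powr (1 - q) * \<bar>a\<bar> powr q"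
proof -
  define X Y where "X = \<bar>a\<bar> / (1 - \<theta>)" and "Y = \<bar>b\<bar> / \<theta>"
  have XY: "X \<ge> 0" "Y \<ge> 0"
    using \<theta> by (auto simp: X_def Y_def)
  have "((1 - \<theta>) * X + \<theta> * Y) powr q \<le> (1 - \<theta>) * X powr q + \<theta> * Y powr q"
  proof (cases "X = 0 \<or> Y = 0")
    case True
    have "\<theta> powr q \<le> \<theta>" "(1 - \<theta>) powr q \<le> 1 - \<theta>"
      using \<theta> q by (auto intro: powr_le_one_le)
    then have "(\<theta> * Y) powr q \<le> \<theta> * Y powr q" "((1 - \<theta>) * X) powr q \<le> (1 - \<theta>) * X powr q"
      using \<theta> XY by (auto simp: powr_mult intro: mult_right_mono)
    with True show ?thesis
      by auto
  next
    case False
    then show ?thesis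
      using convex_onD[OF powr_convex[OF q], of \<theta> X Y] \<theta> XY by simp
  qed
  moreover have "\<bar>a + b\<bar> powr q \<le> ((1 - \<theta>) * X + \<theta> * Y) powr q"
    using q \<theta> by (intro powr_mono2) (auto simp: X_def Y_def)
  moreover have "(1 - \<theta>) * X powr q = (1 - \<theta>) powr (1 - q) * \<bar>a\<bar> powr q"
    and "\<theta> * Y powr q = \<theta> powr (1 - q) * \<bar>b\<bar> powr q"
    using \<theta> by (simp_all add: X_def Y_def powr_divide powr_diff)
  ultimately show ?thesis
    by simp
qed

lemma set_integrable_abs_add_powr:
  fixes f g :: "real \<Rightarrow> real"
  assumes q: "q \<ge> 1"
    and f: "set_integrable lborel A f" "set_integrable lborel A (\<lambda>s. \<bar>f s\<bar> powr q)"
    and g: "set_integrable lborel A g" "set_integrable lborel A (\<lambda>s. \<bar>g s\<bar> powr q)"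
  shows "set_integrable lborel A (\<lambda>s. \<bar>f s + g s\<bar> powr q)"
proof (rule set_integrable_bound)
  let ?M = "(1 / 2) powr (1 - q) :: real"
  show "set_integrable lborel A (\<lambda>s. ?M * \<bar>g s\<bar> powr q + ?M * \<bar>f s\<bar> powr q)"
    by (intro set_integral_add(1) set_integrable_mult_right f(2) g(2))
  have "(\<lambda>s. indicator A s * f s) \<in> borel_measurable lborel"
    "(\<lambda>s. indicator A s * g s) \<in> borel_measurable lborel"
    using f(1) g(1) unfolding set_integrable_def by (simp_all add: borel_measurable_integrable)
  moreover have eq: "(\<lambda>s. indicator A s *\<^sub>R \<bar>f s + g s\<bar> powr q)
      = (\<lambda>s. \<bar>indicator A s * f s + indicator A s * g s\<bar> powr q)"
    by (auto simp: fun_eq_iff indicator_def)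
  ultimately show "set_borel_measurable lborel A (\<lambda>s. \<bar>f s + g s\<bar> powr q)"
    unfolding set_borel_measurable_def eq by measurable
  show "AE s in lborel. s \<in> A \<longrightarrow>
      norm (\<bar>f s + g s\<bar> powr q) \<le> norm (?M * \<bar>g s\<bar> powr q + ?M * \<bar>f s\<bar> powr q)"
  proof (intro AE_I2 impI)
    fix s
    have "\<bar>f s + g s\<bar> powr q \<le> ?M * \<bar>g s\<bar> powr q + (1 - 1 / 2) powr (1 - q) * \<bar>f s\<bar> powr q"
      by (rule abs_add_powr_le[OF q]) auto
    moreover have "0 \<le> ?M * \<bar>g s\<bar> powr q + ?M * \<bar>f s\<bar> powr q"
      by simp
    ultimately show "norm (\<bar>f s + g s\<bar> powr q) \<le> norm (?M * \<bar>g s\<bar> powr q + ?M * \<bar>f s\<bar> powr q)"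
      by simp
  qed
qed

lemma W2q_traj_add_smooth:
  assumes q: "q \<ge> 1" and W: "W2q_traj q t T \<eta> d\<eta> b"
    and f: "\<And>s. s \<in> {t..T} \<Longrightarrow> (f has_real_derivative df s) (at s within {t..T})"
    and df: "\<And>s. s \<in> {t..T} \<Longrightarrow> (df has_real_derivative ddf s) (at s within {t..T})"
    and ddf: "continuous_on {t..T} ddf"
  shows "W2q_traj q t T (\<lambda>s. \<eta> s + f s) (\<lambda>s. d\<eta> s + df s) (\<lambda>s. b s + ddf s)"
proof -
  note WD = W2q_trajD[OF W]
  have ddf_int: "set_integrable lborel {t..T} ddf"
    by (rule borel_integrable_atLeastAtMost'[OF ddf])
  have "set_integrable lborel {t..T} (\<lambda>s. \<bar>ddf s\<bar> powr q)"
    using q by (intro borel_integrable_atLeastAtMost' continuous_intros continuous_on_powr' ddf) auto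
  then have "set_integrable lborel {t..T} (\<lambda>s. \<bar>b s + ddf s\<bar> powr q)"
    by (rule set_integrable_abs_add_powr[OF q WD(1,2) ddf_int])
  moreover have "d\<eta> s + df s = d\<eta> t + df t + (LINT r:{t..s}|lborel. b r + ddf r)"
    if s: "s \<in> {t..T}" for s
  proof -
    have sub: "{t..s} \<subseteq> {t..T}"
      using s by auto
    have "(LINT r:{t..s}|lborel. ddf r) = df s - df t"
      using s sub by (intro set_integral_FTC_Icc DERIV_subset[OF df] continuous_on_subset[OF ddf]) auto
    moreover have "(LINT r:{t..s}|lborel. b r + ddf r)
        = (LINT r:{t..s}|lborel. b r) + (LINT r:{t..s}|lborel. ddf r)"
      by (intro set_integral_add(2) set_integrable_subset[OF WD(1) _ sub]
          set_integrable_subset[OF ddf_int _ sub]) auto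
    ultimately show ?thesis
      using WD(4)[OF s] by simp
  qed
  moreover have "((\<lambda>s. \<eta> s + f s) has_real_derivative d\<eta> s + df s) (at s within {t..T})"
    if "s \<in> {t..T}" for s
    using WD(3)[OF that] f[OF that] by (rule DERIV_add)
  moreover have "set_integrable lborel {t..T} (\<lambda>s. b s + ddf s)"
    by (rule set_integral_add(1)[OF WD(1) ddf_int])
  ultimately show ?thesis
    unfolding W2q_traj_def by blast
qed

section \<open>The energy needed to stop before the wall\<close>

lemma Youngs_inequality_powr:
  fixes q y z :: real
  assumes q: "q > 1" and "y \<ge> 0" "z \<ge> 0"
  shows "y * z powr (q - 1) \<le> y powr q / q + (q - 1) / q * z powr q"
proof -
  have "y * z powr (q - 1) \<le> y powr q / q + (z powr (q - 1)) powr (q / (q - 1)) / (q / (q - 1))"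
    by (rule Youngs_inequality) (use assms in \<open>auto simp: field_simps\<close>)
  also have "(z powr (q - 1)) powr (q / (q - 1)) = z powr q"
    using q by (simp add: powr_powr)
  finally show ?thesis
    by (simp add: field_simps)
qed

lemma Youngs_inequality_brake_acc:
  fixes q c S r y :: real
  assumes q: "q > 1" and c: "c \<ge> 0" and r: "r \<le> S"
  shows "- (c powr (q - 1) * ((S - r) * y))
           \<le> \<bar>y\<bar> powr q / q + (q - 1) / q * \<bar>brake_acc (brake_exp q) c S r\<bar> powr q"
proof -
  let ?z = "\<bar>brake_acc (brake_exp q) c S r\<bar>"
  have "?z powr (q - 1) = c powr (q - 1) * ((S - r) powr brake_exp q) powr (q - 1)"
    using r c by (simp add: brake_acc_def abs_mult powr_mult)
  also have "((S - r) powr brake_exp q) powr (q - 1) = S - r"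
    using q r by (simp add: brake_exp_def powr_powr)
  finally have z: "?z powr (q - 1) = c powr (q - 1) * (S - r)" .
  have "(S - r) * - y \<le> (S - r) * \<bar>y\<bar>"
    using r by (intro mult_left_mono) auto
  then have "c powr (q - 1) * ((S - r) * - y) \<le> c powr (q - 1) * ((S - r) * \<bar>y\<bar>)"
    by (rule mult_left_mono) simp
  then have "- (c powr (q - 1) * ((S - r) * y)) \<le> \<bar>y\<bar> * ?z powr (q - 1)"
    unfolding z by (simp add: mult_ac)
  also have "\<dots> \<le> \<bar>y\<bar> powr q / q + (q - 1) / q * ?z powr q"
    using q by (intro Youngs_inequality_powr) auto
  finally show ?thesis .
qed

lemma W2q_traj_energy_ge:
  assumes q: "q > 1" and W: "W2q_traj q t T \<xi> d\<xi> a" and S: "t \<le> S" "S \<le> T"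
    and wall: "\<xi> S \<le> 1" and c: "c \<ge> 0"
  shows "c powr (q - 1) * (\<xi> t + (S - t) * d\<xi> t - 1)
           - (q - 1) / q * (LINT r:{t..S}|lborel. \<bar>brake_acc (brake_exp q) c S r\<bar> powr q)
         \<le> (1 / q) * (LINT r:{t..S}|lborel. \<bar>a r\<bar> powr q)"
proof -
  note WD = W2q_trajD[OF W]
  have sub: "{t..S} \<subseteq> {t..T}"
    using S by auto
  let ?z = "\<lambda>r. \<bar>brake_acc (brake_exp q) c S r\<bar> powr q"
  have ai: "set_integrable lborel {t..S} (\<lambda>r. (S - r) * a r)"
    by (intro set_integrable_continuous_mult set_integrable_subset[OF WD(1) _ sub]
        continuous_intros) simp
  have zi: "set_integrable lborel {t..S} ?z"
    using q brake_exp_pos[OF q]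
    by (intro borel_integrable_atLeastAtMost' continuous_intros continuous_on_powr'
        continuous_on_brake_acc) auto
  have "(LINT r:{t..S}|lborel. - (c powr (q - 1)) * ((S - r) * a r) - (q - 1) / q * ?z r)
      \<le> (LINT r:{t..S}|lborel. \<bar>a r\<bar> powr q / q)"
  proof (rule set_integral_mono)
    show "set_integrable lborel {t..S} (\<lambda>r. - (c powr (q - 1)) * ((S - r) * a r) - (q - 1) / q * ?z r)"
      by (intro set_integral_diff(1) set_integrable_mult_right ai zi)
    show "set_integrable lborel {t..S} (\<lambda>r. \<bar>a r\<bar> powr q / q)"
      by (intro set_integrable_divide set_integrable_subset[OF WD(2) _ sub]) simp
    fix r assume "r \<in> {t..S}"
    then show "- (c powr (q - 1)) * ((S - r) * a r) - (q - 1) / q * ?z r \<le> \<bar>a r\<bar> powr q / q"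
      using Youngs_inequality_brake_acc[OF q c, of r S "a r"] by simp
  qed
  moreover have "(LINT r:{t..S}|lborel. - (c powr (q - 1)) * ((S - r) * a r) - (q - 1) / q * ?z r)
      = - (c powr (q - 1)) * (LINT r:{t..S}|lborel. (S - r) * a r)
        - (q - 1) / q * (LINT r:{t..S}|lborel. ?z r)"
    using set_integral_diff(2)[OF set_integrable_mult_right[OF ai] set_integrable_mult_right[OF zi],
        of "- (c powr (q - 1))" "(q - 1) / q"]
    by (simp only: set_integral_mult_right)
  moreover have "\<xi> t + (S - t) * d\<xi> t - 1 \<le> - (LINT r:{t..S}|lborel. (S - r) * a r)"
    using W2q_traj_taylor[OF W S] wall by simp
  then have "c powr (q - 1) * (\<xi> t + (S - t) * d\<xi> t - 1)
      \<le> c powr (q - 1) * - (LINT r:{t..S}|lborel. (S - r) * a r)"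
    by (intro mult_left_mono) auto
  ultimately show ?thesis
    by (simp add: set_integral_divide_zero)
qed

lemma braking_energy_le_W2q_energy:
  assumes q: "q > 1" and W: "W2q_traj q t T \<xi> d\<xi> a"
    and x: "\<xi> t = x" "x < 1" and v: "d\<xi> t = v" "v > 0"
    and hT: "t + brake_time q x v \<le> T" and wall: "\<xi> (t + brake_time q x v) \<le> 1"
  shows "braking_energy q x v \<le> (1 / q) * (LINT s:{t..T}|lborel. \<bar>a s\<bar> powr q)"
proof -
  let ?h = "brake_time q x v"
  have "braking_energy q x v \<le> (1 / q) * (LINT s:{t..t + ?h}|lborel. \<bar>a s\<bar> powr q)"
    using W2q_traj_energy_ge[OF q W _ hT wall, of "brake_amp q x v"]
      brake_time_pos[OF q x(2) v(2)] brake_amp_pos[OF q x(2) v(2)] x(1) v(1)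
    by (simp add: braking_energy_eq_dual_bound[OF q x(2) v(2), of t])
  also have "\<dots> \<le> (1 / q) * (LINT s:{t..T}|lborel. \<bar>a s\<bar> powr q)"
  proof -
    have "(LINT s:{t..t + ?h}|lborel. \<bar>a s\<bar> powr q) \<le> (LINT s:{t..T}|lborel. \<bar>a s\<bar> powr q)"
      unfolding set_lebesgue_integral_def
      using W2q_trajD(2)[OF W] set_integrable_subset[OF W2q_trajD(2)[OF W], of "{t..t + ?h}"] hT
      by (intro integral_mono) (auto simp: set_integrable_def indicator_def)
    then show ?thesis
      using q by (simp add: divide_right_mono)
  qed
  finally show ?thesis .
qed

section \<open>Admissible trajectories and braking\<close>

definition admissible ::
  "real \<Rightarrow> real \<Rightarrow> real \<Rightarrow> real \<Rightarrow> real \<Rightarrow> (real \<Rightarrow> real) \<Rightarrow> (real \<Rightarrow> real) \<Rightarrow> (real \<Rightarrow> real) \<Rightarrow> bool"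
where
  "admissible q t T x v \<xi> d\<xi> a \<longleftrightarrow>
     W2q_traj q t T \<xi> d\<xi> a \<and> \<xi> t = x \<and> d\<xi> t = v \<and> (\<forall>s\<in>{t..T}. \<xi> s \<in> {-1..1})"

lemma value_fun_eq_Inf_admissible:
  "value_fun q l g T t x v = Inf {cost q l g T t \<xi> d\<xi> a | \<xi> d\<xi> a. admissible q t T x v \<xi> d\<xi> a}"
  unfolding value_fun_def admissible_def by simp

lemma admissible_rest_at_wall: "admissible q t T 1 0 (\<lambda>_. 1) (\<lambda>_. 0) (\<lambda>_. 0)"
  unfolding admissible_def W2q_traj_def by (auto simp: set_integrable_def)

lemma admissible_add_brake:
  fixes q t x v :: real
  defines "p \<equiv> brake_exp q" and "c \<equiv> brake_amp q x v" and "S \<equiv> t + brake_time q x v"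
  assumes q: "q > 1" and x: "x < 1" and v: "v > 0"
    and adm: "admissible q t T 1 0 \<eta> d\<eta> b" and hT: "S \<le> T"
    and room: "\<And>s. s \<in> {t..S} \<Longrightarrow> - x \<le> \<eta> s"
  shows "admissible q t T x v (\<lambda>s. \<eta> s + brake_disp p c S s) (\<lambda>s. d\<eta> s + brake_vel p c S s)
           (\<lambda>s. b s + brake_acc p c S s)"
proof -
  have W: "W2q_traj q t T \<eta> d\<eta> b" and start: "\<eta> t = 1" "d\<eta> t = 0"
    and range: "\<forall>s\<in>{t..T}. \<eta> s \<in> {-1..1}"
    using adm unfolding admissible_def by blast+
  have p: "p > 0" and c: "c > 0"
    using brake_exp_pos[OF q] brake_amp_pos[OF q x v] by (simp_all add: p_def c_def)
  have low: "brake_disp p c S s \<ge> x - 1" if "s \<in> {t..S}" for s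
    using brake_disp_mono[of c p t s S] brake_disp_start[OF q x v, of t] c p that
    by (simp add: p_def c_def S_def)
  have "\<eta> s + brake_disp p c S s \<ge> -1" if s: "s \<in> {t..T}" for s
  proof (cases "s \<le> S")
    case True
    then show ?thesis
      using low[of s] room[of s] s by auto
  next
    case False
    then show ?thesis
      using brake_eq_0_after(1)[of S s p c] p range s by auto
  qed
  moreover have "\<eta> s + brake_disp p c S s \<le> 1" if s: "s \<in> {t..T}" for s
  proof -
    have "\<eta> s \<le> 1"
      using range s by auto
    then show ?thesis
      using brake_disp_nonpos[of c p S s] c p by linarith
  qed
  moreover have "W2q_traj q t T (\<lambda>s. \<eta> s + brake_disp p c S s) (\<lambda>s. d\<eta> s + brake_vel p c S s)
      (\<lambda>s. b s + brake_acc p c S s)"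
    using q p
    by (intro W2q_traj_add_smooth[OF _ W, where f = "brake_disp p c S" and df = "brake_vel p c S"
          and ddf = "brake_acc p c S"] has_real_derivative_brake_disp
        has_real_derivative_brake_vel continuous_on_brake_acc) auto
  ultimately show ?thesis
    unfolding admissible_def
    using start brake_disp_start[OF q x v, of t] brake_vel_start[OF q x v, of t]
    by (simp add: p_def c_def S_def)
qed

lemma set_integral_abs_add_powr_diff_le:
  fixes f g :: "real \<Rightarrow> real"
  assumes q: "q \<ge> 1" and \<theta>: "0 < \<theta>" "\<theta> < 1"
    and f: "set_integrable lborel A (\<lambda>s. \<bar>f s\<bar> powr q)"
    and g: "set_integrable lborel A (\<lambda>s. \<bar>g s\<bar> powr q)"
    and fg: "set_integrable lborel A (\<lambda>s. \<bar>f s + g s\<bar> powr q)"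
  shows "(LINT s:A|lborel. \<bar>f s + g s\<bar> powr q - \<bar>f s\<bar> powr q)
           \<le> \<theta> powr (1 - q) * (LINT s:A|lborel. \<bar>g s\<bar> powr q)
             + ((1 - \<theta>) powr (1 - q) - 1) * (LINT s:A|lborel. \<bar>f s\<bar> powr q)"
proof -
  have "(LINT s:A|lborel. \<bar>f s + g s\<bar> powr q - \<bar>f s\<bar> powr q)
      \<le> (LINT s:A|lborel. \<theta> powr (1 - q) * \<bar>g s\<bar> powr q
                           + ((1 - \<theta>) powr (1 - q) - 1) * \<bar>f s\<bar> powr q)"
  proof (rule set_integral_mono)
    show "set_integrable lborel A (\<lambda>s. \<bar>f s + g s\<bar> powr q - \<bar>f s\<bar> powr q)"
      by (rule set_integral_diff(1)[OF fg f])
    show "set_integrable lborel A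
        (\<lambda>s. \<theta> powr (1 - q) * \<bar>g s\<bar> powr q + ((1 - \<theta>) powr (1 - q) - 1) * \<bar>f s\<bar> powr q)"
      by (intro set_integral_add(1) set_integrable_mult_right f g)
    fix s
    show "\<bar>f s + g s\<bar> powr q - \<bar>f s\<bar> powr q
        \<le> \<theta> powr (1 - q) * \<bar>g s\<bar> powr q + ((1 - \<theta>) powr (1 - q) - 1) * \<bar>f s\<bar> powr q"
      using abs_add_powr_le[OF q \<theta>, of "f s" "g s"] by (simp add: algebra_simps)
  qed
  also have "\<dots> = \<theta> powr (1 - q) * (LINT s:A|lborel. \<bar>g s\<bar> powr q)
      + ((1 - \<theta>) powr (1 - q) - 1) * (LINT s:A|lborel. \<bar>f s\<bar> powr q)"
    using set_integral_add(2)[OF set_integrable_mult_right[OF g] set_integrable_mult_right[OF f],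
        of "\<theta> powr (1 - q)" "(1 - \<theta>) powr (1 - q) - 1"]
    by (simp only: set_integral_mult_right)
  finally show ?thesis .
qed

lemma set_integral_diff_eq_on_subset:
  fixes f g :: "real \<Rightarrow> real"
  assumes f: "set_integrable M A f" and g: "set_integrable M A g" and B: "B \<subseteq> A"
    and eq: "\<And>s. s \<in> A \<Longrightarrow> s \<notin> B \<Longrightarrow> f s = g s"
  shows "(LINT s:A|M. f s) - (LINT s:A|M. g s) = (LINT s:B|M. f s - g s)"
proof -
  have "(LINT s:A|M. f s) - (LINT s:A|M. g s) = (LINT s:A|M. f s - g s)"
    by (rule set_integral_diff(2)[OF f g, symmetric])
  also have "\<dots> = (LINT s:B|M. f s - g s)"
    unfolding set_lebesgue_integral_def
    by (rule Bochner_Integration.integral_cong) (use B eq in \<open>auto simp: indicator_def\<close>)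
  finally show ?thesis .
qed

section \<open>Limits near the wall\<close>

lemma asymp_equiv_of_bounded_diff:
  fixes f g :: "'a \<Rightarrow> real"
  assumes bound: "eventually (\<lambda>z. \<bar>f z - g z\<bar> \<le> B) F" and g: "filterlim g at_top F"
  shows "f \<sim>[F] g"
proof (rule smallo_imp_asymp_equiv)
  have "(\<lambda>z. f z - g z) \<in> O[F](\<lambda>_. 1)"
    using bound by (intro bigoI[of _ B]) (auto elim: eventually_mono)
  moreover have "(\<lambda>_. 1) \<in> o[F](g)"
  proof (rule smalloI_tendsto)
    show "((\<lambda>z. 1 / g z) \<longlongrightarrow> 0) F"
      using tendsto_inverse_0_at_top[OF g] by (simp add: inverse_eq_divide)
    have "eventually (\<lambda>z. 0 < g z) F"
      using g filterlim_at_top_dense by blast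
    then show "eventually (\<lambda>z. g z \<noteq> 0) F"
      by (rule eventually_mono) simp
  qed
  ultimately show "(\<lambda>z. f z - g z) \<in> o[F](g)"
    by (rule landau_o.big_small_trans)
qed

lemma powr_div_le_powr_ratio:
  fixes d v q :: real
  assumes d: "0 < d" "d \<le> 1" and v: "0 < v" and q: "1 \<le> q"
  shows "v powr (2 * q - 1) / d powr (q - 1) \<le> (v / d) powr (2 * q - 1)"
proof -
  have "d powr (2 * q - 1) \<le> d powr (q - 1)"
    using d q by (intro powr_mono') auto
  then show ?thesis
    using d v by (simp add: powr_divide divide_left_mono)
qed

lemma filterlim_ratio_at_top:
  fixes q :: real
  assumes q: "q \<ge> 1"
    and near: "eventually (\<lambda>(x, v). 0 < x \<and> x < 1 \<and> 0 < v) F"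
    and R: "filterlim (\<lambda>(x, v). v powr (2 * q - 1) / (1 - x) powr (q - 1)) at_top F"
  shows "filterlim (\<lambda>(x, v). v / (1 - x)) at_top F"
  unfolding filterlim_at_top_gt[where c = 0]
proof (intro allI impI)
  fix Z :: real assume Z: "Z > 0"
  from R have "eventually (\<lambda>(x, v). Z powr (2 * q - 1) < v powr (2 * q - 1) / (1 - x) powr (q - 1)) F"
    unfolding filterlim_at_top_dense case_prod_beta by blast
  with near show "eventually (\<lambda>z. Z \<le> (\<lambda>(x, v). v / (1 - x)) z) F"
  proof eventually_elim
    case (elim z)
    obtain x v where z: "z = (x, v)"
      by (cases z)
    have pos: "0 < x" "x < 1" "0 < v"
      using elim unfolding z by auto
    have "Z powr (2 * q - 1) < (v / (1 - x)) powr (2 * q - 1)"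
      using elim powr_div_le_powr_ratio[of "1 - x" v q] pos q unfolding z by auto
    moreover have "(v / (1 - x)) powr (2 * q - 1) \<le> Z powr (2 * q - 1)" if "v / (1 - x) < Z"
      using that pos q by (intro powr_mono2) auto
    ultimately show ?case
      unfolding z by fastforce
  qed
qed

lemma filterlim_brake_time_at_right_0:
  assumes near: "eventually (\<lambda>(x, v). x < 1 \<and> 0 < v) F"
    and ratio: "filterlim (\<lambda>(x, v). v / (1 - x)) at_top F" and q: "q > 1"
  shows "filterlim (\<lambda>(x, v). brake_time q x v) (at_right 0) F"
proof (rule tendsto_imp_filterlim_at_right)
  have "(\<lambda>(x, v). brake_time q x v) = (\<lambda>z. (brake_exp q + 2) * inverse ((\<lambda>(x, v). v / (1 - x)) z))"
    by (auto simp: fun_eq_iff brake_time_def)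
  moreover have "((\<lambda>z. (brake_exp q + 2) * inverse ((\<lambda>(x, v). v / (1 - x)) z)) \<longlongrightarrow> 0) F"
    using tendsto_mult[OF tendsto_const tendsto_inverse_0_at_top[OF ratio]] by simp
  ultimately show "((\<lambda>(x, v). brake_time q x v) \<longlongrightarrow> 0) F"
    by simp
  show "eventually (\<lambda>z. (\<lambda>(x, v). brake_time q x v) z > 0) F"
    using near by (rule eventually_mono) (auto intro: brake_time_pos[OF q])
qed

lemma eventually_fst_at_left_1:
  "eventually (\<lambda>z. 0 < fst z \<and> fst z < 1) (filtercomap fst (at_left (1::real)))"
  using eventually_at_left_real[of 0 1] by (auto intro: eventually_filtercomapI elim: eventually_mono)

lemma filterlim_brake_time_high_energy:
  fixes q :: real
  defines "F \<equiv> inf (filtercomap fst (at_left 1))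
    (inf (principal {p. snd p > 0})
      (filtercomap (\<lambda>(x, v). v powr (2*q - 1) / (1 - x) powr (q - 1)) at_top))"
  assumes q: "q > 1"
  shows "eventually (\<lambda>(x, v). 0 < x \<and> x < 1 \<and> 0 < v) F"
    and "filterlim (\<lambda>(x, v). v powr (2*q - 1) / (1 - x) powr (q - 1)) at_top F"
    and "filterlim (\<lambda>(x, v). brake_time q x v) (at_right 0) F"
proof -
  have "eventually (\<lambda>z. 0 < fst z \<and> fst z < 1) F"
    unfolding F_def by (rule filter_leD[OF inf_le1 eventually_fst_at_left_1])
  moreover have "eventually (\<lambda>z. 0 < snd z) F"
    unfolding F_def by (rule filter_leD[OF le_infI2[OF inf_le1]]) (simp add: eventually_principal)
  ultimately show near: "eventually (\<lambda>(x, v). 0 < x \<and> x < 1 \<and> 0 < v) F"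
    by eventually_elim (simp add: case_prod_beta)
  show R: "filterlim (\<lambda>(x, v). v powr (2*q - 1) / (1 - x) powr (q - 1)) at_top F"
    unfolding F_def by (rule filterlim_mono[OF filterlim_filtercomap order_refl le_infI2[OF inf_le2]])
  show "filterlim (\<lambda>(x, v). brake_time q x v) (at_right 0) F"
    using near q
    by (intro filterlim_brake_time_at_right_0 filterlim_ratio_at_top[OF _ near R])
      (auto elim: eventually_mono)
qed

lemma filterlim_brake_time_near_rest:
  fixes q \<tau> C :: real
  defines "F \<equiv> inf (filtercomap fst (at_left 1))
    (inf (principal {(x, v). v > 0 \<and> v powr (2*q - 1) / (1 - x) powr (q - 1) < C})
      (filtercomap (\<lambda>(x, v). v * \<tau> / (1 - x)) at_top))"
  assumes q: "q > 1" and \<tau>: "\<tau> > 0"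
  shows "eventually (\<lambda>(x, v). 0 < x \<and> x < 1 \<and> 0 < v \<and> v powr (2*q - 1) / (1 - x) powr (q - 1) < C) F"
    and "filterlim (\<lambda>(x, v). brake_time q x v) (at_right 0) F"
proof -
  have "eventually (\<lambda>z. 0 < fst z \<and> fst z < 1) F"
    unfolding F_def by (rule filter_leD[OF inf_le1 eventually_fst_at_left_1])
  moreover have "eventually (\<lambda>z. z \<in> {(x, v). v > 0 \<and> v powr (2*q - 1) / (1 - x) powr (q - 1) < C}) F"
    unfolding F_def by (rule filter_leD[OF le_infI2[OF inf_le1]]) (simp add: eventually_principal)
  ultimately show near: "eventually (\<lambda>(x, v). 0 < x \<and> x < 1 \<and> 0 < v
      \<and> v powr (2*q - 1) / (1 - x) powr (q - 1) < C) F"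
    by eventually_elim (auto simp: case_prod_beta)
  have "filterlim (\<lambda>(x, v). v * \<tau> / (1 - x)) at_top F"
    unfolding F_def by (rule filterlim_mono[OF filterlim_filtercomap order_refl le_infI2[OF inf_le2]])
  then have "filterlim (\<lambda>z. 1 / \<tau> * (\<lambda>(x, v). v * \<tau> / (1 - x)) z) at_top F"
    using \<tau> by (intro filterlim_tendsto_pos_mult_at_top[OF tendsto_const]) auto
  moreover have "(\<lambda>z. 1 / \<tau> * (\<lambda>(x, v). v * \<tau> / (1 - x)) z) = (\<lambda>(x, v). v / (1 - x))"
    using \<tau> by (auto simp: fun_eq_iff)
  ultimately show "filterlim (\<lambda>(x, v). brake_time q x v) (at_right 0) F"
    using near q by (intro filterlim_brake_time_at_right_0) (auto elim: eventually_mono)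
qed

lemma eventually_nonneg_at_right_0:
  fixes \<eta> :: "real \<Rightarrow> real"
  assumes cont: "continuous_on {t..T} \<eta>" and pos: "\<eta> t > 0" and tT: "t < T"
  shows "eventually (\<lambda>h. \<forall>s\<in>{t..t + h}. 0 \<le> \<eta> s) (at_right 0)"
proof -
  obtain \<delta> where \<delta>: "\<delta> > 0" and near: "\<And>s. s \<in> {t..T} \<Longrightarrow> dist s t < \<delta> \<Longrightarrow> dist (\<eta> s) (\<eta> t) < \<eta> t"
    using cont[unfolded continuous_on_iff] pos tT by (metis atLeastAtMost_iff order.refl less_imp_le)
  have "eventually (\<lambda>h. h \<in> {0<..<min \<delta> (T - t)}) (at_right 0)"
    using \<delta> tT by (intro eventually_at_right_real) simp
  then show ?thesis
  proof (rule eventually_mono)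
    fix h assume h: "h \<in> {0<..<min \<delta> (T - t)}"
    show "\<forall>s\<in>{t..t + h}. 0 \<le> \<eta> s"
    proof
      fix s assume "s \<in> {t..t + h}"
      then have "dist (\<eta> s) (\<eta> t) < \<eta> t"
        using h by (intro near) (auto simp: dist_real_def)
      then show "0 \<le> \<eta> s"
        by (simp add: dist_real_def)
    qed
  qed
qed

lemma tendsto_set_integral_Icc_at_right_0:
  fixes f :: "real \<Rightarrow> real"
  assumes f: "set_integrable lborel {t..T} f" and tT: "t < T"
  shows "((\<lambda>h. LINT s:{t..t + h}|lborel. f s) \<longlongrightarrow> 0) (at_right 0)"
proof -
  have "continuous_on {t..T} (\<lambda>s. integral {t..s} f)"
    by (rule indefinite_integral_continuous_1[OF set_borel_integral_eq_integral(1)[OF f]])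
  then have "((\<lambda>s. integral {t..s} f) \<longlongrightarrow> integral {t..t} f) (at t within {t..T})"
    using tT unfolding continuous_on_def by fastforce
  moreover have "filterlim (\<lambda>h. t + h) (at t within {t..T}) (at_right 0)"
  proof (rule filterlim_at_withinI)
    show "filterlim (\<lambda>h. t + h) (nhds t) (at_right 0)"
      by (auto intro!: tendsto_eq_intros)
    have "eventually (\<lambda>h. h \<in> {0<..<T - t}) (at_right 0)"
      using tT by (intro eventually_at_right_real) simp
    then show "eventually (\<lambda>h. t + h \<in> {t..T} - {t}) (at_right 0)"
      by (rule eventually_mono) auto
  qed
  ultimately have "((\<lambda>h. integral {t..t + h} f) \<longlongrightarrow> 0) (at_right 0)"
    using filterlim_compose by fastforce
  moreover have "eventually (\<lambda>h. h \<in> {0<..<T - t}) (at_right 0)"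
    using tT by (intro eventually_at_right_real) simp
  then have "eventually (\<lambda>h. integral {t..t + h} f = (LINT s:{t..t + h}|lborel. f s)) (at_right 0)"
  proof (rule eventually_mono)
    fix h assume "h \<in> {0<..<T - t}"
    then have "set_integrable lborel {t..t + h} f"
      by (intro set_integrable_subset[OF f]) auto
    then show "integral {t..t + h} f = (LINT s:{t..t + h}|lborel. f s)"
      by (simp add: set_borel_integral_eq_integral(2))
  qed
  ultimately show ?thesis
    by (rule Lim_transform_eventually)
qed

section \<open>The value function\<close>

context
  fixes q T t Lb Gb :: real
    and l :: "real \<Rightarrow> real \<Rightarrow> real \<Rightarrow> real" and g :: "real \<Rightarrow> real \<Rightarrow> real"
  assumes q: "q > 1" and t: "0 \<le> t" "t < T"
    and l_cont: "continuous_on (Xi \<times> {0..T}) (\<lambda>((x, v), s). l x v s)"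
    and Lb: "\<And>x v s. x \<in> {-1..1} \<Longrightarrow> s \<in> {0..T} \<Longrightarrow> \<bar>l x v s\<bar> \<le> Lb"
    and Gb: "\<And>x v. x \<in> {-1..1} \<Longrightarrow> \<bar>g x v\<bar> \<le> Gb"
begin

lemma set_integrable_running_cost:
  assumes "admissible q t T x v \<xi> d\<xi> a"
  shows "set_integrable lborel {t..T} (\<lambda>s. l (\<xi> s) (d\<xi> s) s)"
proof -
  have W: "W2q_traj q t T \<xi> d\<xi> a" and range: "\<forall>s\<in>{t..T}. \<xi> s \<in> {-1..1}"
    using assms unfolding admissible_def by blast+
  have c: "continuous_on {t..T} (\<lambda>s. ((\<xi> s, d\<xi> s), s))"
    using W2q_traj_continuous[OF W] by (intro continuous_intros) auto
  have "(\<lambda>s. ((\<xi> s, d\<xi> s), s)) ` {t..T} \<subseteq> Xi \<times> {0..T}"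
    using range t by (auto simp: Xi_def)
  from continuous_on_compose2[OF l_cont c this]
  have "continuous_on {t..T} (\<lambda>s. l (\<xi> s) (d\<xi> s) s)"
    by simp
  then show ?thesis
    by (rule borel_integrable_atLeastAtMost')
qed

lemma cost_eq:
  assumes "admissible q t T x v \<xi> d\<xi> a"
  shows "cost q l g T t \<xi> d\<xi> a = (LINT s:{t..T}|lborel. l (\<xi> s) (d\<xi> s) s)
           + (1 / q) * (LINT s:{t..T}|lborel. \<bar>a s\<bar> powr q) + g (\<xi> T) (d\<xi> T)"
proof -
  have "set_integrable lborel {t..T} (\<lambda>s. (1 / q) * \<bar>a s\<bar> powr q)"
    using assms unfolding admissible_def by (intro set_integrable_mult_right W2q_trajD(2)) blast
  then show ?thesis
    unfolding cost_def by (simp add: set_integral_add(2)[OF set_integrable_running_cost[OF assms]])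
qed

lemma abs_cost_minus_energy_le:
  assumes adm: "admissible q t T x v \<xi> d\<xi> a"
  shows "\<bar>cost q l g T t \<xi> d\<xi> a - (1 / q) * (LINT s:{t..T}|lborel. \<bar>a s\<bar> powr q)\<bar> \<le> Lb * (T - t) + Gb"
proof -
  have range: "\<forall>s\<in>{t..T}. \<xi> s \<in> {-1..1}"
    using adm unfolding admissible_def by blast
  have l_bound: "\<bar>l (\<xi> s) (d\<xi> s) s\<bar> \<le> Lb" if "s \<in> {t..T}" for s
    using Lb range that t by auto
  note li = set_integrable_running_cost[OF adm]
  have const: "set_integrable lborel {t..T} (\<lambda>_. c)" for c :: real
    by (rule borel_integrable_atLeastAtMost') simp
  have "(LINT s:{t..T}|lborel. - Lb) \<le> (LINT s:{t..T}|lborel. l (\<xi> s) (d\<xi> s) s)"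
    by (rule set_integral_mono[OF const li]) (use l_bound in fastforce)
  moreover have "(LINT s:{t..T}|lborel. l (\<xi> s) (d\<xi> s) s) \<le> (LINT s:{t..T}|lborel. Lb)"
    by (rule set_integral_mono[OF li const]) (use l_bound in fastforce)
  moreover have "(LINT s:{t..T}|lborel. c) = c * (T - t)" for c :: real
    using t by (simp add: set_integral_const)
  moreover have "\<bar>g (\<xi> T) (d\<xi> T)\<bar> \<le> Gb"
    using Gb range t by auto
  ultimately show ?thesis
    unfolding cost_eq[OF adm] by (simp add: abs_le_iff)
qed

lemma bdd_below_admissible_costs:
  "bdd_below {cost q l g T t \<xi> d\<xi> a | \<xi> d\<xi> a. admissible q t T x v \<xi> d\<xi> a}"
proof (rule bdd_belowI)
  fix y assume "y \<in> {cost q l g T t \<xi> d\<xi> a | \<xi> d\<xi> a. admissible q t T x v \<xi> d\<xi> a}"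
  then obtain \<xi> d\<xi> a where y: "y = cost q l g T t \<xi> d\<xi> a" and adm: "admissible q t T x v \<xi> d\<xi> a"
    by blast
  have "0 \<le> (LINT s:{t..T}|lborel. \<bar>a s\<bar> powr q)"
    unfolding set_lebesgue_integral_def by (rule integral_nonneg_AE) (auto simp: indicator_def)
  then have "0 \<le> (1 / q) * (LINT s:{t..T}|lborel. \<bar>a s\<bar> powr q)"
    using q by simp
  then show "- (Lb * (T - t) + Gb) \<le> y"
    using abs_cost_minus_energy_le[OF adm] unfolding y by linarith
qed

lemma value_fun_le_cost:
  "admissible q t T x v \<xi> d\<xi> a \<Longrightarrow> value_fun q l g T t x v \<le> cost q l g T t \<xi> d\<xi> a"
  unfolding value_fun_eq_Inf_admissible by (rule cInf_lower[OF _ bdd_below_admissible_costs]) blast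

lemma exists_admissible_cost_lt:
  assumes "admissible q t T x v \<xi>\<^sub>0 d\<xi>\<^sub>0 a\<^sub>0" and "\<epsilon> > 0"
  obtains \<xi> d\<xi> a where "admissible q t T x v \<xi> d\<xi> a"
    and "cost q l g T t \<xi> d\<xi> a < value_fun q l g T t x v + \<epsilon>"
proof -
  have "{cost q l g T t \<xi> d\<xi> a | \<xi> d\<xi> a. admissible q t T x v \<xi> d\<xi> a} \<noteq> {}"
    using assms(1) by blast
  from cInf_lessD[OF this, of "value_fun q l g T t x v + \<epsilon>"] assms(2) that show ?thesis
    unfolding value_fun_eq_Inf_admissible by auto
qed

lemma running_cost_diff_le:
  assumes adm\<xi>: "admissible q t T x v \<xi> d\<xi> a" and adm\<eta>: "admissible q t T y w \<eta> d\<eta> b"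
    and S: "t \<le> S" "S \<le> T" and eq: "\<And>s. s \<in> {S..T} \<Longrightarrow> \<xi> s = \<eta> s \<and> d\<xi> s = d\<eta> s"
  shows "(LINT s:{t..T}|lborel. l (\<xi> s) (d\<xi> s) s) - (LINT s:{t..T}|lborel. l (\<eta> s) (d\<eta> s) s)
           \<le> 2 * Lb * (S - t)"
proof -
  have sub: "{t..S} \<subseteq> {t..T}"
    using S by auto
  have range: "\<forall>s\<in>{t..T}. \<xi> s \<in> {-1..1} \<and> \<eta> s \<in> {-1..1}"
    using adm\<xi> adm\<eta> unfolding admissible_def by blast
  note l\<xi> = set_integrable_running_cost[OF adm\<xi>] and l\<eta> = set_integrable_running_cost[OF adm\<eta>]
  have "(LINT s:{t..T}|lborel. l (\<xi> s) (d\<xi> s) s) - (LINT s:{t..T}|lborel. l (\<eta> s) (d\<eta> s) s)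
      = (LINT s:{t..S}|lborel. l (\<xi> s) (d\<xi> s) s - l (\<eta> s) (d\<eta> s) s)"
    by (rule set_integral_diff_eq_on_subset[OF l\<xi> l\<eta> sub]) (use eq in auto)
  also have "\<dots> \<le> (LINT s:{t..S}|lborel. 2 * Lb)"
  proof (rule set_integral_mono)
    show "set_integrable lborel {t..S} (\<lambda>s. l (\<xi> s) (d\<xi> s) s - l (\<eta> s) (d\<eta> s) s)"
      by (rule set_integrable_subset[OF set_integral_diff(1)[OF l\<xi> l\<eta>] _ sub]) simp
    show "set_integrable lborel {t..S} (\<lambda>s. 2 * Lb)"
      by (rule borel_integrable_atLeastAtMost') simp
    fix s assume "s \<in> {t..S}"
    then have "\<bar>l (\<xi> s) (d\<xi> s) s\<bar> \<le> Lb" "\<bar>l (\<eta> s) (d\<eta> s) s\<bar> \<le> Lb"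
      using Lb range sub t by auto
    then show "l (\<xi> s) (d\<xi> s) s - l (\<eta> s) (d\<eta> s) s \<le> 2 * Lb"
      by simp
  qed
  also have "\<dots> = 2 * Lb * (S - t)"
    using S by (simp add: set_integral_const)
  finally show ?thesis .
qed

lemma cost_le_of_eq_after:
  assumes adm\<xi>: "admissible q t T x v \<xi> d\<xi> a" and adm\<eta>: "admissible q t T y w \<eta> d\<eta> b"
    and S: "t \<le> S" "S \<le> T"
    and eq: "\<And>s. s \<in> {S..T} \<Longrightarrow> \<xi> s = \<eta> s \<and> d\<xi> s = d\<eta> s \<and> a s = b s"
  shows "cost q l g T t \<xi> d\<xi> a \<le> cost q l g T t \<eta> d\<eta> b + 2 * Lb * (S - t)
           + (1 / q) * (LINT s:{t..S}|lborel. \<bar>a s\<bar> powr q - \<bar>b s\<bar> powr q)"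
proof -
  have W: "W2q_traj q t T \<xi> d\<xi> a" "W2q_traj q t T \<eta> d\<eta> b"
    using adm\<xi> adm\<eta> unfolding admissible_def by blast+
  have sub: "{t..S} \<subseteq> {t..T}"
    using S by auto
  have after: "a s = b s" if "s \<in> {t..T}" "s \<notin> {t..S}" for s
    using eq[of s] that by auto
  have "(LINT s:{t..T}|lborel. \<bar>a s\<bar> powr q) - (LINT s:{t..T}|lborel. \<bar>b s\<bar> powr q)
      = (LINT s:{t..S}|lborel. \<bar>a s\<bar> powr q - \<bar>b s\<bar> powr q)"
    by (rule set_integral_diff_eq_on_subset[OF W2q_trajD(2)[OF W(1)] W2q_trajD(2)[OF W(2)] sub])
      (simp add: after)
  then have "(1 / q) * (LINT s:{t..T}|lborel. \<bar>a s\<bar> powr q)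
      = (1 / q) * (LINT s:{t..T}|lborel. \<bar>b s\<bar> powr q)
        + (1 / q) * (LINT s:{t..S}|lborel. \<bar>a s\<bar> powr q - \<bar>b s\<bar> powr q)"
    by (simp add: algebra_simps)
  moreover have "\<xi> T = \<eta> T" "d\<xi> T = d\<eta> T"
    using eq[of T] S by auto
  moreover have "(LINT s:{t..T}|lborel. l (\<xi> s) (d\<xi> s) s) - (LINT s:{t..T}|lborel. l (\<eta> s) (d\<eta> s) s)
      \<le> 2 * Lb * (S - t)"
    using eq by (intro running_cost_diff_le[OF adm\<xi> adm\<eta> S]) blast
  ultimately show ?thesis
    unfolding cost_eq[OF adm\<xi>] cost_eq[OF adm\<eta>] by simp
qed

lemma value_fun_le_cost_add_brake:
  assumes adm: "admissible q t T 1 0 \<eta> d\<eta> b" and x: "x < 1" and v: "v > 0"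
    and hT: "t + brake_time q x v \<le> T"
    and room: "\<And>s. s \<in> {t..t + brake_time q x v} \<Longrightarrow> - x \<le> \<eta> s"
  shows "value_fun q l g T t x v \<le> cost q l g T t \<eta> d\<eta> b + 2 * Lb * brake_time q x v
           + (1 / q) * (LINT s:{t..t + brake_time q x v}|lborel.
               \<bar>b s + brake_acc (brake_exp q) (brake_amp q x v) (t + brake_time q x v) s\<bar> powr q
               - \<bar>b s\<bar> powr q)"
proof -
  let ?p = "brake_exp q" and ?c = "brake_amp q x v" and ?S = "t + brake_time q x v"
  have adm': "admissible q t T x v (\<lambda>s. \<eta> s + brake_disp ?p ?c ?S s)
      (\<lambda>s. d\<eta> s + brake_vel ?p ?c ?S s) (\<lambda>s. b s + brake_acc ?p ?c ?S s)"
    by (rule admissible_add_brake[OF q x v adm hT room])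
  have "value_fun q l g T t x v \<le> cost q l g T t (\<lambda>s. \<eta> s + brake_disp ?p ?c ?S s)
      (\<lambda>s. d\<eta> s + brake_vel ?p ?c ?S s) (\<lambda>s. b s + brake_acc ?p ?c ?S s)"
    by (rule value_fun_le_cost[OF adm'])
  also have "\<dots> \<le> cost q l g T t \<eta> d\<eta> b + 2 * Lb * (?S - t)
      + (1 / q) * (LINT s:{t..?S}|lborel. \<bar>b s + brake_acc ?p ?c ?S s\<bar> powr q - \<bar>b s\<bar> powr q)"
    using brake_eq_0_after[OF _ brake_exp_pos[OF q]] brake_time_pos[OF q x v] hT
    by (intro cost_le_of_eq_after[OF adm' adm]) auto
  finally show ?thesis
    by simp
qed

lemma value_fun_le_braking_energy:
  assumes x: "-1 \<le> x" "x < 1" and v: "v > 0" and hT: "t + brake_time q x v \<le> T"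
  shows "value_fun q l g T t x v \<le> braking_energy q x v + 3 * Lb * (T - t) + Gb"
proof -
  have "Lb \<ge> 0"
    using Lb[of 0 0 0] t by auto
  then have "2 * Lb * brake_time q x v \<le> 2 * Lb * (T - t)"
    using hT by (intro mult_left_mono) auto
  moreover have "cost q l g T t (\<lambda>_. 1) (\<lambda>_. 0) (\<lambda>_. 0) \<le> Lb * (T - t) + Gb"
    using abs_cost_minus_energy_le[OF admissible_rest_at_wall] by simp
  moreover have "value_fun q l g T t x v \<le> cost q l g T t (\<lambda>_. 1) (\<lambda>_. 0) (\<lambda>_. 0)
      + 2 * Lb * brake_time q x v + braking_energy q x v"
    using value_fun_le_cost_add_brake[OF admissible_rest_at_wall x(2) v hT] x(1)
      brake_acc_energy[OF q x(2) v, of t]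
    by simp
  ultimately show ?thesis
    by simp
qed

lemma braking_energy_le_value_fun:
  assumes x: "-1 \<le> x" "x < 1" and v: "v > 0" and hT: "t + brake_time q x v \<le> T"
  shows "braking_energy q x v - (Lb * (T - t) + Gb) \<le> value_fun q l g T t x v"
  unfolding value_fun_eq_Inf_admissible
proof (rule cInf_greatest)
  have "admissible q t T x v
      (\<lambda>s. 1 + brake_disp (brake_exp q) (brake_amp q x v) (t + brake_time q x v) s)
      (\<lambda>s. 0 + brake_vel (brake_exp q) (brake_amp q x v) (t + brake_time q x v) s)
      (\<lambda>s. 0 + brake_acc (brake_exp q) (brake_amp q x v) (t + brake_time q x v) s)"
    by (rule admissible_add_brake[OF q x(2) v admissible_rest_at_wall hT]) (use x(1) in simp)
  then show "{cost q l g T t \<xi> d\<xi> a | \<xi> d\<xi> a. admissible q t T x v \<xi> d\<xi> a} \<noteq> {}"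
    by blast
next
  fix y assume "y \<in> {cost q l g T t \<xi> d\<xi> a | \<xi> d\<xi> a. admissible q t T x v \<xi> d\<xi> a}"
  then obtain \<xi> d\<xi> a where y: "y = cost q l g T t \<xi> d\<xi> a" and adm: "admissible q t T x v \<xi> d\<xi> a"
    by blast
  then have W: "W2q_traj q t T \<xi> d\<xi> a" and start: "\<xi> t = x" "d\<xi> t = v"
    and range: "\<forall>s\<in>{t..T}. \<xi> s \<in> {-1..1}"
    unfolding admissible_def by blast+
  have "t + brake_time q x v \<in> {t..T}"
    using brake_time_pos[OF q x(2) v] hT by simp
  with range have "\<xi> (t + brake_time q x v) \<le> 1"
    by auto
  then have "braking_energy q x v \<le> (1 / q) * (LINT s:{t..T}|lborel. \<bar>a s\<bar> powr q)"
    by (rule braking_energy_le_W2q_energy[OF q W start(1) x(2) start(2) v hT])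
  then show "braking_energy q x v - (Lb * (T - t) + Gb) \<le> y"
    using abs_cost_minus_energy_le[OF adm] unfolding y by linarith
qed

lemma abs_value_fun_minus_braking_energy_le:
  assumes x: "-1 \<le> x" "x < 1" and v: "v > 0" and hT: "t + brake_time q x v \<le> T"
  shows "\<bar>value_fun q l g T t x v - braking_energy q x v\<bar> \<le> 3 * Lb * (T - t) + Gb"
proof -
  have "0 \<le> Lb * (T - t)"
    using Lb[of 0 0 0] t by auto
  then show ?thesis
    using value_fun_le_braking_energy[OF x v hT] braking_energy_le_value_fun[OF x v hT]
    by (simp add: abs_le_iff)
qed

lemma value_fun_le_cost_add_braking_energy:
  assumes adm: "admissible q t T 1 0 \<eta> d\<eta> b" and x: "x < 1" and v: "v > 0"
    and hT: "t + brake_time q x v \<le> T"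
    and room: "\<And>s. s \<in> {t..t + brake_time q x v} \<Longrightarrow> - x \<le> \<eta> s"
    and \<theta>: "0 < \<theta>" "\<theta> < 1"
  shows "value_fun q l g T t x v \<le> cost q l g T t \<eta> d\<eta> b + 2 * Lb * brake_time q x v
           + \<theta> powr (1 - q) * braking_energy q x v
           + ((1 - \<theta>) powr (1 - q) - 1)
             * ((1 / q) * (LINT s:{t..t + brake_time q x v}|lborel. \<bar>b s\<bar> powr q))"
proof -
  let ?p = "brake_exp q" and ?c = "brake_amp q x v" and ?S = "t + brake_time q x v"
  let ?acc = "brake_acc ?p ?c ?S"
  have sub: "{t..?S} \<subseteq> {t..T}"
    using hT by auto
  have W: "W2q_traj q t T \<eta> d\<eta> b"
    "W2q_traj q t T (\<lambda>s. \<eta> s + brake_disp ?p ?c ?S s) (\<lambda>s. d\<eta> s + brake_vel ?p ?c ?S s)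
       (\<lambda>s. b s + ?acc s)"
    using adm admissible_add_brake[OF q x v adm hT room] unfolding admissible_def by blast+
  have "set_integrable lborel {t..?S} (\<lambda>s. \<bar>?acc s\<bar> powr q)"
    using q brake_exp_pos[OF q]
    by (intro borel_integrable_atLeastAtMost' continuous_intros continuous_on_powr'
        continuous_on_brake_acc) auto
  from set_integral_abs_add_powr_diff_le[OF _ \<theta> set_integrable_subset[OF W2q_trajD(2)[OF W(1)] _ sub]
      this set_integrable_subset[OF W2q_trajD(2)[OF W(2)] _ sub]] q
  have "(LINT s:{t..?S}|lborel. \<bar>b s + ?acc s\<bar> powr q - \<bar>b s\<bar> powr q)
      \<le> \<theta> powr (1 - q) * (LINT s:{t..?S}|lborel. \<bar>?acc s\<bar> powr q)
        + ((1 - \<theta>) powr (1 - q) - 1) * (LINT s:{t..?S}|lborel. \<bar>b s\<bar> powr q)"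
    by simp
  then have "(1 / q) * (LINT s:{t..?S}|lborel. \<bar>b s + ?acc s\<bar> powr q - \<bar>b s\<bar> powr q)
      \<le> (1 / q) * (\<theta> powr (1 - q) * (LINT s:{t..?S}|lborel. \<bar>?acc s\<bar> powr q)
        + ((1 - \<theta>) powr (1 - q) - 1) * (LINT s:{t..?S}|lborel. \<bar>b s\<bar> powr q))"
    using q by (intro mult_left_mono) auto
  then have "(1 / q) * (LINT s:{t..?S}|lborel. \<bar>b s + ?acc s\<bar> powr q - \<bar>b s\<bar> powr q)
      \<le> \<theta> powr (1 - q) * ((1 / q) * (LINT s:{t..?S}|lborel. \<bar>?acc s\<bar> powr q))
        + ((1 - \<theta>) powr (1 - q) - 1) * ((1 / q) * (LINT s:{t..?S}|lborel. \<bar>b s\<bar> powr q))"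
    by (simp only: distrib_left mult.left_commute)
  then show ?thesis
    using value_fun_le_cost_add_brake[OF adm x v hT room] unfolding brake_acc_energy[OF q x v]
    by linarith
qed

lemma value_fun_asymp_equiv_braking_energy:
  "(\<lambda>(x, v). value_fun q l g T t x v)
     \<sim>[inf (filtercomap fst (at_left 1))
        (inf (principal {p. snd p > 0})
             (filtercomap (\<lambda>(x, v). v powr (2*q - 1) / (1 - x) powr (q - 1)) at_top))]
   (\<lambda>(x, v). braking_energy q x v)"
  (is "_ \<sim>[?F] _")
proof (rule asymp_equiv_of_bounded_diff)
  note F = filterlim_brake_time_high_energy[OF q]
  have "eventually (\<lambda>h. h < T - t) (at_right 0)"
    using eventually_at_right_real[of 0 "T - t"] t by (auto elim: eventually_mono)
  with F(3) have "eventually (\<lambda>(x, v). brake_time q x v < T - t) ?F"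
    unfolding filterlim_iff case_prod_beta by blast
  with F(1) show "eventually (\<lambda>z. \<bar>(\<lambda>(x, v). value_fun q l g T t x v) z
      - (\<lambda>(x, v). braking_energy q x v) z\<bar> \<le> 3 * Lb * (T - t) + Gb) ?F"
  proof eventually_elim
    case (elim z)
    then show ?case
      by (cases z) (auto intro!: abs_value_fun_minus_braking_energy_le)
  qed
  let ?K = "q powr (q - 1) / (2 * q - 1) powr q"
  have "(\<lambda>(x, v). braking_energy q x v)
      = (\<lambda>z. ?K * (\<lambda>(x, v). v powr (2*q - 1) / (1 - x) powr (q - 1)) z)"
    by (auto simp: fun_eq_iff braking_energy_def)
  moreover have "filterlim (\<lambda>z. ?K * (\<lambda>(x, v). v powr (2*q - 1) / (1 - x) powr (q - 1)) z) at_top ?F"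
    using q by (intro filterlim_tendsto_pos_mult_at_top[OF tendsto_const _ F(2)]) simp
  ultimately show "filterlim (\<lambda>(x, v). braking_energy q x v) at_top ?F"
    by (simp only:)
qed

lemma eventually_brake_overhead_lt:
  assumes adm: "admissible q t T 1 0 \<eta> d\<eta> b" and e: "e > 0"
  shows "eventually (\<lambda>h. t + h \<le> T \<and> (\<forall>s\<in>{t..t + h}. 0 \<le> \<eta> s)
           \<and> 2 * Lb * h + c * ((1 / q) * (LINT s:{t..t + h}|lborel. \<bar>b s\<bar> powr q)) < e) (at_right 0)"
proof -
  have W: "W2q_traj q t T \<eta> d\<eta> b" and start: "\<eta> t = 1"
    using adm unfolding admissible_def by blast+
  have "eventually (\<lambda>h. h < T - t) (at_right 0)"
    using eventually_at_right_real[of 0 "T - t"] t by (auto elim: eventually_mono)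
  moreover have "eventually (\<lambda>h. \<forall>s\<in>{t..t + h}. 0 \<le> \<eta> s) (at_right 0)"
    using W2q_traj_continuous(1)[OF W] start t by (intro eventually_nonneg_at_right_0) auto
  moreover have "((\<lambda>h. 2 * Lb * h + c * ((1 / q) * (LINT s:{t..t + h}|lborel. \<bar>b s\<bar> powr q)))
      \<longlongrightarrow> 2 * Lb * 0 + c * ((1 / q) * 0)) (at_right 0)"
    by (intro tendsto_add tendsto_mult tendsto_const tendsto_ident_at
        tendsto_set_integral_Icc_at_right_0[OF W2q_trajD(2)[OF W] t(2)])
  then have "eventually (\<lambda>h. 2 * Lb * h + c * ((1 / q) * (LINT s:{t..t + h}|lborel. \<bar>b s\<bar> powr q))
      < e) (at_right 0)"
    using e by (intro order_tendstoD(2)) simp_all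
  ultimately show ?thesis
    by eventually_elim auto
qed

lemma value_fun_le_braking_energy_add_value_at_rest:
  assumes C: "C > 0" and e: "\<epsilon> > 0"
  shows "eventually (\<lambda>(x, v). value_fun q l g T t x v
           \<le> braking_energy q x v + value_fun q l g T t 1 0 + \<epsilon>)
       (inf (filtercomap fst (at_left 1))
          (inf (principal {(x, v). v > 0 \<and> v powr (2*q - 1) / (1 - x) powr (q - 1) < C})
               (filtercomap (\<lambda>(x, v). v * (T - t) / (1 - x)) at_top)))"
    (is "eventually _ ?F")
proof -
  obtain \<eta> d\<eta> b where adm: "admissible q t T 1 0 \<eta> d\<eta> b"
    and cost: "cost q l g T t \<eta> d\<eta> b < value_fun q l g T t 1 0 + \<epsilon> / 3"
    using exists_admissible_cost_lt[OF admissible_rest_at_wall, of "\<epsilon> / 3"] e by auto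
  obtain \<theta> where \<theta>: "0 < \<theta>" "\<theta> < 1" and energy: "\<And>x v.
      v powr (2*q - 1) / (1 - x) powr (q - 1) < C \<Longrightarrow>
      \<theta> powr (1 - q) * braking_energy q x v \<le> braking_energy q x v + \<epsilon> / 3"
    using braking_energy_scale_le[OF q C, of "\<epsilon> / 3"] e by auto
  have "T - t > 0"
    using t by simp
  note F = filterlim_brake_time_near_rest[OF q this, of C]
  from F(2) eventually_brake_overhead_lt[OF adm, of "\<epsilon> / 3" "(1 - \<theta>) powr (1 - q) - 1"] e
  have "eventually (\<lambda>(x, v). t + brake_time q x v \<le> T
      \<and> (\<forall>s\<in>{t..t + brake_time q x v}. 0 \<le> \<eta> s)
      \<and> 2 * Lb * brake_time q x v + ((1 - \<theta>) powr (1 - q) - 1)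
          * ((1 / q) * (LINT s:{t..t + brake_time q x v}|lborel. \<bar>b s\<bar> powr q)) < \<epsilon> / 3) ?F"
    unfolding filterlim_iff case_prod_beta by auto
  with F(1) show ?thesis
  proof eventually_elim
    case (elim z)
    obtain x v where z: "z = (x, v)"
      by (cases z)
    have x: "0 < x" "x < 1" and v: "0 < v" and R: "v powr (2*q - 1) / (1 - x) powr (q - 1) < C"
      and hT: "t + brake_time q x v \<le> T" and room: "\<And>s. s \<in> {t..t + brake_time q x v} \<Longrightarrow> - x \<le> \<eta> s"
      and overhead: "2 * Lb * brake_time q x v + ((1 - \<theta>) powr (1 - q) - 1)
        * ((1 / q) * (LINT s:{t..t + brake_time q x v}|lborel. \<bar>b s\<bar> powr q)) < \<epsilon> / 3"
      using elim unfolding z by fastforce+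
    have "value_fun q l g T t x v \<le> cost q l g T t \<eta> d\<eta> b + 2 * Lb * brake_time q x v
        + \<theta> powr (1 - q) * braking_energy q x v + ((1 - \<theta>) powr (1 - q) - 1)
          * ((1 / q) * (LINT s:{t..t + brake_time q x v}|lborel. \<bar>b s\<bar> powr q))"
      by (rule value_fun_le_cost_add_braking_energy[OF adm x(2) v hT _ \<theta>]) (rule room)
    then show ?case
      using cost overhead energy[OF R] unfolding z case_prod_conv by linarith
  qed
qed

end

lemma cost_bounds_of_bounded:
  fixes l :: "real \<Rightarrow> real \<Rightarrow> real \<Rightarrow> real" and g :: "real \<Rightarrow> real \<Rightarrow> real"
  assumes l_bdd: "bounded ((\<lambda>((x, v), s). l x v s) ` (Xi \<times> {0..T}))"
    and g_bdd: "bounded ((\<lambda>(x, v). g x v) ` Xi)"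
  obtains Lb Gb where "\<And>x v s. x \<in> {-1..1} \<Longrightarrow> s \<in> {0..T} \<Longrightarrow> \<bar>l x v s\<bar> \<le> Lb"
    and "\<And>x v. x \<in> {-1..1} \<Longrightarrow> \<bar>g x v\<bar> \<le> Gb"
proof -
  from l_bdd obtain Lb where Lb: "\<forall>y\<in>(\<lambda>((x, v), s). l x v s) ` (Xi \<times> {0..T}). norm y \<le> Lb"
    unfolding bounded_iff by blast
  from g_bdd obtain Gb where Gb: "\<forall>y\<in>(\<lambda>(x, v). g x v) ` Xi. norm y \<le> Gb"
    unfolding bounded_iff by blast
  show ?thesis
  proof (rule that)
    fix x v s :: real assume "x \<in> {-1..1}" "s \<in> {0..T}"
    then have "l x v s \<in> (\<lambda>((x, v), s). l x v s) ` (Xi \<times> {0..T})"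
      by (force simp: Xi_def)
    then show "\<bar>l x v s\<bar> \<le> Lb"
      using Lb by fastforce
  next
    fix x v :: real assume "x \<in> {-1..1}"
    then have "g x v \<in> (\<lambda>(x, v). g x v) ` Xi"
      by (force simp: Xi_def)
    then show "\<bar>g x v\<bar> \<le> Gb"
      using Gb by fastforce
  qed
qed

theorem proposition3p2:
  fixes q T t C :: real
    and l :: "real \<Rightarrow> real \<Rightarrow> real \<Rightarrow> real" and g :: "real \<Rightarrow> real \<Rightarrow> real"
  assumes q: "q > 1" and T: "T > 0" and t: "0 \<le> t" "t < T"
    and l_cont: "continuous_on (Xi \<times> {0..T}) (\<lambda>((x, v), s). l x v s)"
    and l_bdd: "bounded ((\<lambda>((x, v), s). l x v s) ` (Xi \<times> {0..T}))"
    and g_cont: "continuous_on Xi (\<lambda>(x, v). g x v)"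
    and g_bdd: "bounded ((\<lambda>(x, v). g x v) ` Xi)"
    and C: "C > 0"
  shows
    "((\<lambda>(x, v). value_fun q l g T t x v)
       \<sim>[inf (filtercomap fst (at_left 1))
          (inf (principal {p. snd p > 0})
               (filtercomap (\<lambda>(x, v). v powr (2*q - 1) / (1 - x) powr (q - 1)) at_top))]
     (\<lambda>(x, v). q powr (q - 1) / (2*q - 1) powr q * (v powr (2*q - 1) / (1 - x) powr (q - 1))))
   \<and>
    (\<forall>\<epsilon>>0. eventually
       (\<lambda>(x, v). value_fun q l g T t x v
          \<le> q powr (q - 1) / (2*q - 1) powr q * (v powr (2*q - 1) / (1 - x) powr (q - 1))
            + value_fun q l g T t 1 0 + \<epsilon>)
       (inf (filtercomap fst (at_left 1))
          (inf (principal {(x, v). v > 0 \<and> v powr (2*q - 1) / (1 - x) powr (q - 1) < C})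
               (filtercomap (\<lambda>(x, v). v * (T - t) / (1 - x)) at_top))))"
proof -
  obtain Lb Gb where Lb: "\<And>x v s. x \<in> {-1..1} \<Longrightarrow> s \<in> {0..T} \<Longrightarrow> \<bar>l x v s\<bar> \<le> Lb"
    and Gb: "\<And>x v. x \<in> {-1..1} \<Longrightarrow> \<bar>g x v\<bar> \<le> Gb"
    using cost_bounds_of_bounded[OF l_bdd g_bdd] by blast
  show ?thesis
    unfolding braking_energy_def[symmetric]
    by (intro conjI allI impI value_fun_asymp_equiv_braking_energy[OF q t l_cont Lb Gb]
        value_fun_le_braking_energy_add_value_at_rest[OF q t l_cont Lb Gb C])
qed

end
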